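(* Let $\Lambda$ be a positive random variable, let $N(t)$, $t\ge0$, be a standard Poisson process (unit intensity) independent of $\Lambda$, let $(m_n)$ be positive numbers with $m_n\to\infty$, and set $N_n=N(m_n\Lambda)$. Let $X_1,X_2,\ldots$ be i.i.d. random variables with $a=\mathsf{E}X_1\neq0$ and finite variance $\sigma^2=\mathsf{D}X_1$, with each $N_n$ independent of $X_1,X_2,\ldots$ (empty sums are $0$). Let $1\le s\le2$ and write $s=m+\alpha$ with $m$ a nonnegative integer and $0<\alpha\le1$. Then for every $n$ $$ \zeta_s\bigg(\frac{1}{am_n}\sum_{j=1}^{N(m_n\Lambda)}X_j,\;\Lambda\bigg)\le\frac{\mathsf{E}\Lambda^{s/2}}{m_n^{s/2}}\cdot\frac{\Gamma(1+\alpha)}{\Gamma(1+s)}\Big(1+\frac{\sigma^2}{a^2}\Big)^{s/2}. $$ In particular, $$ \zeta_2\bigg(\frac{1}{am_n}\sum_{j=1}^{N(m_n\Lambda)}X_j,\;\Lambda\bigg)\le\frac{\mathsf{E}\Lambda}{2m_n}\Big(1+\frac{\sigma^2}{a^2}\Big). $$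
   Context: For $s>0$ write uniquely $s=m+\alpha$ with $m$ a nonnegative integer and $0<\alpha\le 1$. $\mathcal{F}_s$ denotes the set of all real-valued bounded functions $f$ on $\mathbb{R}$ that are $m$ times differentiable and satisfy $|f^{(m)}(x)-f^{(m)}(y)|\le|x-y|^{\alpha}$ for all $x,y$. The Zolotarev metric is $\zeta_s(X,Y)=\sup\{|\mathsf{E}(f(X)-f(Y))|: f\in\mathcal{F}_s\}$. *)

theory Defs
  imports "HOL-Probability.Probability"
begin

text \<open>Decomposition s = m + alpha with m a nonnegative integer and 0 < alpha \<le> 1 (for s > 0).\<close>
definition zol_m :: "real \<Rightarrow> nat" where
  "zol_m s = nat (\<lceil>s\<rceil> - 1)"

definition zol_alpha :: "real \<Rightarrow> real" where
  "zol_alpha s = s - real (zol_m s)"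

definition zol_class :: "real \<Rightarrow> (real \<Rightarrow> real) set" where
  "zol_class s = {f. bounded (range f)
      \<and> (\<forall>k < zol_m s. \<forall>x. ((deriv ^^ k) f) differentiable (at x))
      \<and> (\<forall>x y. \<bar>(deriv ^^ zol_m s) f x - (deriv ^^ zol_m s) f y\<bar> \<le> \<bar>x - y\<bar> powr zol_alpha s)}"

definition zolotarev :: "'a measure \<Rightarrow> real \<Rightarrow> ('a \<Rightarrow> real) \<Rightarrow> ('a \<Rightarrow> real) \<Rightarrow> ennreal" where
  "zolotarev M s X Y =
     (SUP f \<in> zol_class s. ennreal \<bar>(\<integral>\<omega>. f (X \<omega>) \<partial>M) - (\<integral>\<omega>. f (Y \<omega>) \<partial>M)\<bar>)"

definition std_poisson_process :: "'a measure \<Rightarrow> (real \<Rightarrow> 'a \<Rightarrow> nat) \<Rightarrow> bool" where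
  "std_poisson_process M N \<longleftrightarrow>
     (\<forall>t. N t \<in> measurable M (count_space UNIV))
   \<and> (\<forall>\<omega>\<in>space M. N 0 \<omega> = 0)
   \<and> (\<forall>\<omega>\<in>space M. mono_on {0..} (\<lambda>t. N t \<omega>))
   \<and> (\<forall>\<omega>\<in>space M. \<forall>t\<ge>0. continuous (at_right t) (\<lambda>u. real (N u \<omega>)))
   \<and> (\<forall>(t::nat \<Rightarrow> real) k. 0 \<le> t 0 \<longrightarrow> strict_mono_on {..k} t \<longrightarrow>
        prob_space.indep_vars M (\<lambda>_. count_space UNIV)
          (\<lambda>i \<omega>. N (t (Suc i)) \<omega> - N (t i) \<omega>) {..<k})
   \<and> (\<forall>u t (j::nat). 0 \<le> u \<longrightarrow> u \<le> t \<longrightarrow>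
        measure M {\<omega> \<in> space M. N t \<omega> - N u \<omega> = j} = exp (-(t - u)) * (t - u) ^ j / fact j)"

text \<open>Independence of two random elements with possibly different codomain types:
  their generated sigma-algebras are independent (and both are measurable).\<close>
definition indep_rv :: "'a measure \<Rightarrow> 'b measure \<Rightarrow> ('a \<Rightarrow> 'b) \<Rightarrow> 'c measure \<Rightarrow> ('a \<Rightarrow> 'c) \<Rightarrow> bool" where
  "indep_rv M M1 X1 M2 X2 \<longleftrightarrow>
     X1 \<in> measurable M M1 \<and> X2 \<in> measurable M M2 \<and>
     prob_space.indep_set M {X1 -` A \<inter> space M | A. A \<in> sets M1}
                            {X2 -` B \<inter> space M | B. B \<in> sets M2}"

end

theory Submission
  imports Defs
begin

text \<open>
  Given \<open>\<Lambda> = \<lambda>\<close>, the number of summands \<open>N(m\<lambda>)\<close> is Poisson with mean \<open>m\<lambda>\<close>, so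
  \<open>E f(S) = E L(\<Lambda>)\<close> with \<open>L(\<lambda>) = \<Sum>\<^sub>k P(Poisson(m\<lambda>) = k) E f(S\<^sub>k / (a m))\<close>.
  The Poisson mixture of the \<open>S\<^sub>k / (a m)\<close> has mean \<open>\<lambda>\<close> and second moment about \<open>\<lambda>\<close> equal to
  \<open>A = \<lambda> (1 + \<sigma>\<^sup>2/a\<^sup>2) / m\<close>. A function of \<open>\<F>\<^sub>s\<close>, \<open>1 \<le> s \<le> 2\<close>, has Taylor remainder
  \<open>|f x - f \<lambda> - f' \<lambda> (x - \<lambda>)| \<le> \<Gamma>(1+\<alpha>)/\<Gamma>(1+s) |x - \<lambda>|\<^sup>s\<close>, and \<open>|x - \<lambda>|\<^sup>s = ((x - \<lambda>)\<^sup>2)\<^bsup>s/2\<^esup>\<close>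
  lies below the tangent of the concave map \<open>t \<mapsto> t\<^bsup>s/2\<^esup>\<close> at \<open>A\<close>. Averaging gives
  \<open>|L(\<lambda>) - f(\<lambda>)| \<le> \<Gamma>(1+\<alpha>)/\<Gamma>(1+s) A\<^bsup>s/2\<^esup>\<close>, which is then integrated against the law of \<open>\<Lambda>\<close>.
  The identity \<open>P(N(m\<Lambda>) = k) = E[e\<^sup>-\<^sup>m\<^sup>\<Lambda> (m\<Lambda>)\<^sup>k / k!]\<close> is obtained by approximating \<open>m\<Lambda>\<close>
  from above by random times with countably many values and using right-continuity of the paths.
\<close>

section \<open>A Taylor estimate for Hoelder continuous derivatives\<close>

lemma abs_diff_le_of_deriv_dominated:
  fixes g \<psi> g' \<psi>' :: "real \<Rightarrow> real"
  assumes "a \<le> b" and "continuous_on {a..b} g" and "continuous_on {a..b} \<psi>"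
    and "\<And>z. a < z \<Longrightarrow> z < b \<Longrightarrow> (g has_real_derivative g' z) (at z)"
    and "\<And>z. a < z \<Longrightarrow> z < b \<Longrightarrow> (\<psi> has_real_derivative \<psi>' z) (at z)"
    and "\<And>z. a < z \<Longrightarrow> z < b \<Longrightarrow> \<bar>g' z\<bar> \<le> \<psi>' z"
  shows "\<bar>g b - g a\<bar> \<le> \<psi> b - \<psi> a"
proof -
  have "(\<lambda>z. \<psi> z - g z) a \<le> (\<lambda>z. \<psi> z - g z) b"
  proof (rule DERIV_nonneg_imp_increasing_open[OF \<open>a \<le> b\<close>])
    fix z assume "a < z" "z < b"
    then show "\<exists>d. ((\<lambda>z. \<psi> z - g z) has_real_derivative d) (at z) \<and> 0 \<le> d"
      using assms(4,5) assms(6)[of z]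
      by (intro exI[of _ "\<psi>' z - g' z"]) (auto intro!: derivative_eq_intros simp: abs_le_iff)
  qed (use assms(2,3) in \<open>intro continuous_on_diff\<close>)
  moreover have "(\<lambda>z. \<psi> z + g z) a \<le> (\<lambda>z. \<psi> z + g z) b"
  proof (rule DERIV_nonneg_imp_increasing_open[OF \<open>a \<le> b\<close>])
    fix z assume "a < z" "z < b"
    then show "\<exists>d. ((\<lambda>z. \<psi> z + g z) has_real_derivative d) (at z) \<and> 0 \<le> d"
      using assms(4,5) assms(6)[of z]
      by (intro exI[of _ "\<psi>' z + g' z"]) (auto intro!: derivative_eq_intros simp: abs_le_iff)
  qed (use assms(2,3) in \<open>intro continuous_on_add\<close>)
  ultimately show ?thesis by simp
qed

lemma holder_taylor_right:
  fixes f D :: "real \<Rightarrow> real"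
  assumes "0 < \<alpha>" and f: "\<And>z. (f has_real_derivative D z) (at z)"
    and holder: "\<And>z w. \<bar>D z - D w\<bar> \<le> \<bar>z - w\<bar> powr \<alpha>" and "y \<le> x"
  shows "\<bar>f x - f y - D y * (x - y)\<bar> \<le> (x - y) powr (1 + \<alpha>) / (1 + \<alpha>)"
proof -
  define \<psi> where "\<psi> z = (z - y) powr (1 + \<alpha>) / (1 + \<alpha>)" for z
  have dg: "((\<lambda>z. f z - D y * z) has_real_derivative D z - D y) (at z)" for z
    by (auto intro!: derivative_eq_intros f)
  have "\<bar>(f x - D y * x) - (f y - D y * y)\<bar> \<le> \<psi> x - \<psi> y"
  proof (rule abs_diff_le_of_deriv_dominated[OF \<open>y \<le> x\<close> _ _ dg])
    show "continuous_on {y..x} (\<lambda>z. f z - D y * z)"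
      using dg by (meson DERIV_isCont continuous_at_imp_continuous_on)
    show "continuous_on {y..x} \<psi>"
      unfolding \<psi>_def using \<open>0 < \<alpha>\<close>
      by (intro continuous_on_divide continuous_on_powr' continuous_on_diff) auto
    show "(\<psi> has_real_derivative (z - y) powr \<alpha>) (at z)" if "y < z" for z
    proof -
      have "((\<lambda>z. (z - y) powr (1 + \<alpha>)) has_real_derivative (1 + \<alpha>) * (z - y) powr \<alpha>) (at z)"
        using that by (auto intro!: derivative_eq_intros)
      from DERIV_cdivide[OF this, of "1 + \<alpha>"] show ?thesis
        unfolding \<psi>_def using \<open>0 < \<alpha>\<close> by simp
    qed
    show "\<bar>D z - D y\<bar> \<le> (z - y) powr \<alpha>" if "y < z" for z
      using holder[of z y] that by simp
  qed
  then show ?thesis by (simp add: \<psi>_def algebra_simps)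
qed

lemma holder_taylor:
  fixes f D :: "real \<Rightarrow> real"
  assumes "0 < \<alpha>" and f: "\<And>z. (f has_real_derivative D z) (at z)"
    and holder: "\<And>z w. \<bar>D z - D w\<bar> \<le> \<bar>z - w\<bar> powr \<alpha>"
  shows "\<bar>f x - f y - D y * (x - y)\<bar> \<le> \<bar>x - y\<bar> powr (1 + \<alpha>) / (1 + \<alpha>)"
proof (cases "y \<le> x")
  case True
  then show ?thesis using holder_taylor_right[OF assms] by simp
next
  case False
  \<comment> \<open>the right-hand estimate applied to the reflection \<open>z \<mapsto> f (-z)\<close>\<close>
  have "\<bar>f (- (- x)) - f (- (- y)) - - D (- (- y)) * (- x - - y)\<bar> \<le> (- x - - y) powr (1 + \<alpha>) / (1 + \<alpha>)"
  proof (rule holder_taylor_right[OF \<open>0 < \<alpha>\<close>, where f = "\<lambda>z. f (- z)" and D = "\<lambda>z. - D (- z)"])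
    show "((\<lambda>z. f (- z)) has_real_derivative - D (- z)) (at z)" for z
      using DERIV_chain2[OF f[of "- z"] DERIV_minus[OF DERIV_ident]] by simp
    show "\<bar>- D (- z) - - D (- w)\<bar> \<le> \<bar>z - w\<bar> powr \<alpha>" for z w
      using holder[of "- z" "- w"] by (simp add: abs_minus_commute)
  qed (use False in simp)
  then show ?thesis using False by (simp add: algebra_simps)
qed

section \<open>The Zolotarev classes for \<open>1 \<le> s \<le> 2\<close>\<close>

lemma zol_alpha_pos: "0 < s \<Longrightarrow> 0 < zol_alpha s"
  unfolding zol_alpha_def zol_m_def by linarith

lemma zol_m_eq_0: "0 < s \<Longrightarrow> s \<le> 1 \<Longrightarrow> zol_m s = 0"
  unfolding zol_m_def by (simp add: ceiling_le_iff)

lemma zol_m_eq_1: "1 < s \<Longrightarrow> s \<le> 2 \<Longrightarrow> zol_m s = 1"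
proof -
  assume "1 < s" "s \<le> 2"
  then have "\<lceil>s\<rceil> = 2" by (simp add: ceiling_eq_iff)
  then show ?thesis by (simp add: zol_m_def)
qed

lemma zol_alpha_2: "zol_alpha 2 = 1"
  by (simp add: zol_alpha_def zol_m_eq_1)

lemma zol_classD:
  assumes "f \<in> zol_class s"
  shows "bounded (range f)"
    and "\<And>k x. k < zol_m s \<Longrightarrow> (deriv ^^ k) f differentiable (at x)"
    and "\<And>x y. \<bar>(deriv ^^ zol_m s) f x - (deriv ^^ zol_m s) f y\<bar> \<le> \<bar>x - y\<bar> powr zol_alpha s"
  using assms unfolding zol_class_def by blast+

lemma zol_class_bounded:
  assumes "f \<in> zol_class s"
  obtains B where "\<And>x. \<bar>f x\<bar> \<le> B"
  using zol_classD(1)[OF assms] unfolding bounded_iff by auto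

lemma zol_class_continuous:
  assumes "0 < s" and f: "f \<in> zol_class s"
  shows "continuous_on UNIV f"
proof (cases "zol_m s = 0")
  case True
  have holder: "\<bar>f x - f y\<bar> \<le> \<bar>x - y\<bar> powr zol_alpha s" for x y
    using zol_classD(3)[OF f, of x y] True by simp
  have "isCont f y" for y
  proof -
    have "\<forall>\<^sub>F x in at y. norm (f x - f y) \<le> \<bar>x - y\<bar> powr zol_alpha s"
      by (intro always_eventually allI) (simp add: holder)
    moreover have "((\<lambda>x. \<bar>x - y\<bar> powr zol_alpha s) \<longlongrightarrow> 0) (at y)"
    proof (rule tendsto_zero_powrI)
      show "((\<lambda>x. \<bar>x - y\<bar>) \<longlongrightarrow> 0) (at y)"
        using tendsto_rabs_zero[OF LIM_zero[OF tendsto_ident_at]] by simp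
    qed (use zol_alpha_pos[OF \<open>0 < s\<close>] in auto)
    ultimately have "((\<lambda>x. f x - f y) \<longlongrightarrow> 0) (at y)"
      by (rule Lim_null_comparison)
    then show ?thesis
      by (simp add: isCont_def LIM_zero_iff)
  qed
  then show ?thesis by (simp add: continuous_at_imp_continuous_on)
next
  case False
  then have "f differentiable (at x)" for x
    using zol_classD(2)[OF f, of 0 x] by simp
  then show ?thesis
    by (simp add: continuous_at_imp_continuous_on differentiable_imp_continuous_within)
qed

lemma zol_class_taylor_bound:
  assumes "1 \<le> s" "s \<le> 2" and f: "f \<in> zol_class s"
  obtains D where "\<And>x y. \<bar>f x - f y - D y * (x - y)\<bar>
    \<le> Gamma (1 + zol_alpha s) / Gamma (1 + s) * \<bar>x - y\<bar> powr s"
proof (cases "s = 1")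
  case True
  then have "zol_m s = 0" "zol_alpha s = 1" by (simp_all add: zol_alpha_def zol_m_eq_0)
  then have "\<bar>f x - f y\<bar> \<le> \<bar>x - y\<bar> powr 1" for x y
    using zol_classD(3)[OF f, of x y] by simp
  with that[of "\<lambda>_. 0"] show ?thesis
    using True \<open>zol_alpha s = 1\<close> by (simp add: Gamma_numeral)
next
  case False
  with assms have m: "zol_m s = 1" by (intro zol_m_eq_1) auto
  define \<alpha> where "\<alpha> = s - 1"
  have "zol_alpha s = \<alpha>" "0 < \<alpha>" and s: "s = 1 + \<alpha>"
    using False assms by (auto simp: zol_alpha_def m \<alpha>_def)
  have d: "(f has_real_derivative deriv f z) (at z)" for z
    using zol_classD(2)[OF f, of 0 z] m by (simp add: DERIV_deriv_iff_real_differentiable)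
  have holder: "\<bar>deriv f z - deriv f w\<bar> \<le> \<bar>z - w\<bar> powr \<alpha>" for z w
    using zol_classD(3)[OF f, of z w] m \<open>zol_alpha s = \<alpha>\<close> by simp
  have "Gamma (1 + s) = s * Gamma s"
  proof -
    have "s \<notin> \<int>\<^sub>\<le>\<^sub>0" using assms(1) nonpos_Ints_nonpos by fastforce
    then show ?thesis using Gamma_plus1[of s] by (simp add: add.commute)
  qed
  moreover have "0 < Gamma (1 + \<alpha>)"
    using \<open>0 < \<alpha>\<close> by simp
  ultimately have "Gamma (1 + zol_alpha s) / Gamma (1 + s) = 1 / (1 + \<alpha>)"
    unfolding \<open>zol_alpha s = \<alpha>\<close> by (simp add: s)
  then show ?thesis
    using that[of "deriv f"] holder_taylor[OF \<open>0 < \<alpha>\<close> d holder] by (simp add: s)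
qed

section \<open>Poisson weights\<close>

definition poisson_prob :: "real \<Rightarrow> nat \<Rightarrow> real" where
  "poisson_prob \<mu> k = exp (- \<mu>) * \<mu> ^ k / fact k"

lemma poisson_prob_nonneg: "0 \<le> \<mu> \<Longrightarrow> 0 \<le> poisson_prob \<mu> k"
  by (simp add: poisson_prob_def)

lemma poisson_prob_Suc: "poisson_prob \<mu> (Suc k) = \<mu> * poisson_prob \<mu> k / real (Suc k)"
  by (simp add: poisson_prob_def field_simps)

lemma poisson_prob_sums: "poisson_prob \<mu> sums 1"
proof -
  have "(\<lambda>k. exp (- \<mu>) * (\<mu> ^ k /\<^sub>R fact k)) sums (exp (- \<mu>) * exp \<mu>)"
    by (rule sums_mult[OF exp_converges])
  moreover have "(\<lambda>k. exp (- \<mu>) * (\<mu> ^ k /\<^sub>R fact k)) = poisson_prob \<mu>"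
    by (simp add: poisson_prob_def fun_eq_iff divide_inverse)
  ultimately show ?thesis by (simp add: exp_minus)
qed

lemma poisson_prob_sum_le_1: "0 \<le> \<mu> \<Longrightarrow> finite K \<Longrightarrow> (\<Sum>k\<in>K. poisson_prob \<mu> k) \<le> 1"
  using sum_le_suminf[OF sums_summable[OF poisson_prob_sums], of K] poisson_prob_nonneg
  by (simp add: sums_unique[OF poisson_prob_sums, symmetric])

lemma poisson_prob_le_1: "0 \<le> \<mu> \<Longrightarrow> poisson_prob \<mu> k \<le> 1"
  using poisson_prob_sum_le_1[of \<mu> "{k}"] by simp

lemma poisson_prob_sums_mean: "(\<lambda>k. real k * poisson_prob \<mu> k) sums \<mu>"
proof -
  have "real (Suc k) * poisson_prob \<mu> (Suc k) = \<mu> * poisson_prob \<mu> k" for k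
    by (simp add: poisson_prob_Suc)
  then have "(\<lambda>k. real (Suc k) * poisson_prob \<mu> (Suc k)) sums (\<mu> * 1)"
    using sums_mult[OF poisson_prob_sums, of \<mu>] by presburger
  from sums_Suc[OF this] show ?thesis by simp
qed

lemma poisson_prob_sums_second_moment:
  "(\<lambda>k. (real k)\<^sup>2 * poisson_prob \<mu> k) sums (\<mu>\<^sup>2 + \<mu>)"
proof -
  have "(\<lambda>k. \<mu> * (real k * poisson_prob \<mu> k) + \<mu> * poisson_prob \<mu> k) sums (\<mu> * \<mu> + \<mu> * 1)"
    by (intro sums_add sums_mult poisson_prob_sums_mean poisson_prob_sums)
  moreover have "(real (Suc k))\<^sup>2 * poisson_prob \<mu> (Suc k)
      = \<mu> * (real k * poisson_prob \<mu> k) + \<mu> * poisson_prob \<mu> k" for k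
    by (simp add: poisson_prob_Suc power2_eq_square field_simps)
  ultimately have "(\<lambda>k. (real (Suc k))\<^sup>2 * poisson_prob \<mu> (Suc k)) sums (\<mu>\<^sup>2 + \<mu>)"
    by (simp add: power2_eq_square)
  from sums_Suc[OF this] show ?thesis by simp
qed

lemma poisson_prob_sums_scaled_dev:
  assumes "0 < m"
  shows "(\<lambda>k. poisson_prob (m * x) k * (real k / m - x)) sums 0"
proof -
  have "(\<lambda>k. (1 / m) * (real k * poisson_prob (m * x) k) - x * poisson_prob (m * x) k)
      sums ((1 / m) * (m * x) - x * 1)"
    by (intro sums_diff sums_mult poisson_prob_sums_mean poisson_prob_sums)
  then show ?thesis
    using assms by (simp add: field_simps)
qed

lemma poisson_prob_sums_scaled_sq_dev:
  assumes "0 < m"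
  shows "(\<lambda>k. poisson_prob (m * x) k * (real k * v / m\<^sup>2 + (real k / m - x)\<^sup>2))
    sums (x * (1 + v) / m)"
proof -
  let ?p = "poisson_prob (m * x)"
  have "(\<lambda>k. (v / m\<^sup>2 - 2 * x / m) * (real k * ?p k) + (1 / m\<^sup>2) * ((real k)\<^sup>2 * ?p k) + x\<^sup>2 * ?p k)
      sums ((v / m\<^sup>2 - 2 * x / m) * (m * x) + (1 / m\<^sup>2) * ((m * x)\<^sup>2 + m * x) + x\<^sup>2 * 1)"
    by (intro sums_add sums_mult poisson_prob_sums poisson_prob_sums_mean
        poisson_prob_sums_second_moment)
  moreover have "(v / m\<^sup>2 - 2 * x / m) * (m * x) + (1 / m\<^sup>2) * ((m * x)\<^sup>2 + m * x) + x\<^sup>2 * 1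
      = x * (1 + v) / m"
    using assms by (simp add: field_simps power2_eq_square)
  moreover have "(v / m\<^sup>2 - 2 * x / m) * (real k * ?p k) + (1 / m\<^sup>2) * ((real k)\<^sup>2 * ?p k) + x\<^sup>2 * ?p k
      = ?p k * (real k * v / m\<^sup>2 + (real k / m - x)\<^sup>2)" for k
    using assms by (simp add: field_simps power2_eq_square)
  ultimately show ?thesis by simp
qed

section \<open>Taylor remainders under a second moment constraint\<close>

lemma abs_powr_eq_sq_powr: "\<bar>d :: real\<bar> powr s = (d\<^sup>2) powr (s / 2)"
proof (cases "d = 0")
  case False
  then have "d\<^sup>2 = \<bar>d\<bar> powr 2"
    by (simp add: powr_realpow)
  then have "(d\<^sup>2) powr (s / 2) = (\<bar>d\<bar> powr 2) powr (s / 2)"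
    by (simp only:)
  also have "\<dots> = \<bar>d\<bar> powr s"
    by (simp only: powr_powr) simp
  finally show ?thesis ..
qed simp

lemma powr_le_tangent:
  fixes t A q :: real
  assumes "0 < q" "q \<le> 1" "0 < A" "0 \<le> t"
  shows "t powr q \<le> A powr q + q * A powr (q - 1) * (t - A)"
proof -
  define B where "B = A powr (q - 1)"
  have "0 < B"
    using \<open>0 < A\<close> by (simp add: B_def)
  have AB: "A powr q = A * B"
    using \<open>0 < A\<close> by (simp add: B_def powr_diff)
  have "t powr q \<le> (q * t + (1 - q) * A) * B"
  proof (cases "t = 0")
    case True
    then show ?thesis
      using assms \<open>0 < B\<close> by simp
  next
    case False
    have "A powr (1 - q) * B = 1"
      using \<open>0 < A\<close> by (simp add: B_def powr_add[symmetric])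
    then have "t powr q = t powr q * A powr (1 - q) * B"
      by (simp add: mult.assoc)
    also have "\<dots> \<le> (q * t + (1 - q) * A) * B"
      using Youngs_inequality_0[of q "1 - q" t A] False assms \<open>0 < B\<close>
      by (intro mult_right_mono) auto
    finally show ?thesis .
  qed
  then show ?thesis
    unfolding B_def[symmetric] by (simp add: AB algebra_simps)
qed

lemma (in prob_space) expectation_sq_dev:
  fixes Y :: "'a \<Rightarrow> real"
  assumes "integrable M Y" "integrable M (\<lambda>\<omega>. (Y \<omega>)\<^sup>2)"
  shows "expectation (\<lambda>\<omega>. (Y \<omega> - c)\<^sup>2)
    = expectation (\<lambda>\<omega>. (Y \<omega> - expectation Y)\<^sup>2) + (expectation Y - c)\<^sup>2"
proof -
  let ?\<mu> = "expectation Y"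
  have "(\<lambda>\<omega>. (Y \<omega> - c)\<^sup>2) = (\<lambda>\<omega>. (Y \<omega> - ?\<mu>)\<^sup>2 + 2 * (?\<mu> - c) * (Y \<omega> - ?\<mu>) + (?\<mu> - c)\<^sup>2)"
    by (simp add: fun_eq_iff power2_eq_square algebra_simps)
  moreover have "integrable M (\<lambda>\<omega>. (Y \<omega> - ?\<mu>)\<^sup>2)"
    using assms by (simp add: power2_diff)
  ultimately show ?thesis
    using assms by (simp add: prob_space)
qed

lemma (in prob_space) expectation_taylor_remainder_le:
  fixes Y :: "'a \<Rightarrow> real" and f :: "real \<Rightarrow> real"
  assumes Y: "integrable M Y" "integrable M (\<lambda>\<omega>. (Y \<omega>)\<^sup>2)"
    and fY: "integrable M (\<lambda>\<omega>. f (Y \<omega>))"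
    and taylor: "\<And>y. \<bar>f y - f c - d * (y - c)\<bar> \<le> G * \<bar>y - c\<bar> powr s"
    and "0 \<le> G" "0 < s" "s \<le> 2" "0 < A"
  shows "\<bar>expectation (\<lambda>\<omega>. f (Y \<omega>)) - f c - d * (expectation Y - c)\<bar>
    \<le> G * (A powr (s / 2) + s / 2 * A powr (s / 2 - 1) * (expectation (\<lambda>\<omega>. (Y \<omega> - c)\<^sup>2) - A))"
proof -
  \<comment> \<open>\<open>\<bar>y - c\<bar> powr s = ((y - c)\<^sup>2) powr (s / 2)\<close> lies below the tangent at \<open>A\<close> of the
    concave map \<open>t \<mapsto> t powr (s / 2)\<close>, a quadratic in \<open>y\<close>\<close>
  define U where "U y = G * (A powr (s / 2) + s / 2 * A powr (s / 2 - 1) * ((y - c)\<^sup>2 - A))" for y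
  have "\<bar>f y - f c - d * (y - c)\<bar> \<le> U y" for y
    using taylor[of y] abs_powr_eq_sq_powr[of "y - c" s] assms(5-)
      mult_left_mono[OF powr_le_tangent[of "s / 2" A "(y - c)\<^sup>2"] \<open>0 \<le> G\<close>]
    unfolding U_def by simp
  then have "expectation (\<lambda>\<omega>. \<bar>f (Y \<omega>) - f c - d * (Y \<omega> - c)\<bar>) \<le> expectation (\<lambda>\<omega>. U (Y \<omega>))"
    using Y fY unfolding U_def by (intro integral_mono) (auto simp: power2_diff)
  then have "\<bar>expectation (\<lambda>\<omega>. f (Y \<omega>) - f c - d * (Y \<omega> - c))\<bar> \<le> expectation (\<lambda>\<omega>. U (Y \<omega>))"
    by (rule order_trans[OF integral_abs_bound])
  then show ?thesis
    using Y fY by (simp add: U_def prob_space power2_diff)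
qed

lemma weighted_suminf_abs_le:
  fixes p b r :: "nat \<Rightarrow> real"
  assumes "(\<lambda>k. p k * b k) sums S" and "\<And>k. 0 \<le> p k" and "\<And>k. \<bar>r k\<bar> \<le> b k"
  shows "summable (\<lambda>k. p k * r k)" and "\<bar>\<Sum>k. p k * r k\<bar> \<le> S"
proof -
  have le: "\<bar>p k * r k\<bar> \<le> p k * b k" for k
    using mult_left_mono[OF assms(3) assms(2)] by (simp add: abs_mult assms(2))
  then have "summable (\<lambda>k. \<bar>p k * r k\<bar>)"
    by (intro summable_comparison_test'[OF sums_summable[OF assms(1)], where N = 0]) simp
  then show "summable (\<lambda>k. p k * r k)"
    by (rule summable_rabs_cancel)
  have "\<bar>\<Sum>k. p k * r k\<bar> \<le> (\<Sum>k. \<bar>p k * r k\<bar>)"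
    by (rule summable_rabs) fact
  also have "\<dots> \<le> S"
    using sums_le[OF _ summable_sums[OF \<open>summable (\<lambda>k. \<bar>p k * r k\<bar>)\<close>] assms(1)] le by blast
  finally show "\<bar>\<Sum>k. p k * r k\<bar> \<le> S" .
qed

lemma (in prob_space) poisson_mixture_taylor_bound:
  fixes T :: "nat \<Rightarrow> 'a \<Rightarrow> real" and f :: "real \<Rightarrow> real"
  assumes T: "\<And>k. integrable M (T k)" "\<And>k. integrable M (\<lambda>\<omega>. (T k \<omega>)\<^sup>2)"
    and fT: "\<And>k. integrable M (\<lambda>\<omega>. f (T k \<omega>))"
    and mean: "\<And>k. expectation (T k) = real k / m"
    and var: "\<And>k. expectation (\<lambda>\<omega>. (T k \<omega> - real k / m)\<^sup>2) = real k * v / m\<^sup>2"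
    and taylor: "\<And>y. \<bar>f y - f x - d * (y - x)\<bar> \<le> G * \<bar>y - x\<bar> powr s"
    and "0 \<le> G" "0 < s" "s \<le> 2" "0 < m" "0 \<le> v" "0 < x"
  shows "summable (\<lambda>k. poisson_prob (m * x) k * expectation (\<lambda>\<omega>. f (T k \<omega>)))"
    and "\<bar>(\<Sum>k. poisson_prob (m * x) k * expectation (\<lambda>\<omega>. f (T k \<omega>))) - f x\<bar>
      \<le> G * (x * (1 + v) / m) powr (s / 2)"
proof -
  define p where "p = poisson_prob (m * x)"
  define e where "e k = expectation (\<lambda>\<omega>. f (T k \<omega>))" for k
  define A where "A = x * (1 + v) / m"
  define q where "q = s / 2"
  define w where "w k = real k * v / m\<^sup>2 + (real k / m - x)\<^sup>2" for k
  \<comment> \<open>the remainder bound \<open>b k\<close> is affine in the second moment \<open>w k\<close> of \<open>T k\<close> about \<open>x\<close>,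
    and the Poisson weights average \<open>w k\<close> to \<open>A\<close>\<close>
  define b where "b k = G * (A powr q + q * A powr (q - 1) * (w k - A))" for k
  define r where "r k = e k - f x - d * (real k / m - x)" for k
  have "0 < A"
    using \<open>0 < x\<close> \<open>0 \<le> v\<close> \<open>0 < m\<close> by (simp add: A_def)
  have p_nonneg: "0 \<le> p k" for k
    using \<open>0 < x\<close> \<open>0 < m\<close> by (simp add: p_def poisson_prob_nonneg)
  have r_le: "\<bar>r k\<bar> \<le> b k" for k
  proof -
    have "expectation (\<lambda>\<omega>. (T k \<omega> - x)\<^sup>2) = w k"
      using expectation_sq_dev[OF T(1,2), of k x] by (simp add: mean var w_def)
    then show ?thesis
      using expectation_taylor_remainder_le[OF T(1)[of k] T(2)[of k] fT[of k] taylor \<open>0 \<le> G\<close> \<open>0 < s\<close> \<open>s \<le> 2\<close> \<open>0 < A\<close>]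
      by (simp add: r_def b_def e_def q_def mean)
  qed
  have pb: "(\<lambda>k. p k * b k) sums (G * A powr q)"
  proof -
    have "(\<lambda>k. G * (A powr q - q * A powr (q - 1) * A) * p k + G * q * A powr (q - 1) * (p k * w k))
        sums (G * (A powr q - q * A powr (q - 1) * A) * 1 + G * q * A powr (q - 1) * A)"
      unfolding p_def w_def A_def
      by (intro sums_add sums_mult poisson_prob_sums poisson_prob_sums_scaled_sq_dev \<open>0 < m\<close>)
    then show ?thesis
      by (simp add: b_def algebra_simps)
  qed
  have pr: "(\<lambda>k. p k * r k) sums (\<Sum>k. p k * r k)" and pr_le: "\<bar>\<Sum>k. p k * r k\<bar> \<le> G * A powr q"
    using weighted_suminf_abs_le[OF pb p_nonneg r_le] by (simp_all add: summable_sums)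
  have "(\<lambda>k. p k * r k + f x * p k + d * (p k * (real k / m - x))) sums ((\<Sum>k. p k * r k) + f x * 1 + d * 0)"
    unfolding p_def
    by (intro sums_add sums_mult pr[unfolded p_def] poisson_prob_sums poisson_prob_sums_scaled_dev \<open>0 < m\<close>)
  then have pe: "(\<lambda>k. p k * e k) sums ((\<Sum>k. p k * r k) + f x)"
    by (simp add: r_def algebra_simps)
  then show "summable (\<lambda>k. poisson_prob (m * x) k * expectation (\<lambda>\<omega>. f (T k \<omega>)))"
    by (auto simp: p_def e_def sums_iff)
  have "(\<Sum>k. p k * r k) = (\<Sum>k. p k * e k) - f x"
    using sums_unique[OF pe] by simp
  with pr_le show "\<bar>(\<Sum>k. poisson_prob (m * x) k * expectation (\<lambda>\<omega>. f (T k \<omega>))) - f x\<bar>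
      \<le> G * (x * (1 + v) / m) powr (s / 2)"
    by (simp only: p_def e_def A_def q_def)
qed

section \<open>Moments of i.i.d. partial sums\<close>

lemma (in prob_space)
  fixes X Y :: "'a \<Rightarrow> real" and g :: "real \<Rightarrow> real"
  assumes [measurable]: "X \<in> borel_measurable M" "Y \<in> borel_measurable M" "g \<in> borel_measurable borel"
    and distr: "distr M borel X = distr M borel Y"
  shows integrable_comp_eq_if_distr_eq: "integrable M (\<lambda>\<omega>. g (X \<omega>)) \<longleftrightarrow> integrable M (\<lambda>\<omega>. g (Y \<omega>))"
    and integral_comp_eq_if_distr_eq: "expectation (\<lambda>\<omega>. g (X \<omega>)) = expectation (\<lambda>\<omega>. g (Y \<omega>))"
proof -
  show "integrable M (\<lambda>\<omega>. g (X \<omega>)) \<longleftrightarrow> integrable M (\<lambda>\<omega>. g (Y \<omega>))"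
    using integrable_distr_eq[of X M borel g] integrable_distr_eq[of Y M borel g] distr by simp
  show "expectation (\<lambda>\<omega>. g (X \<omega>)) = expectation (\<lambda>\<omega>. g (Y \<omega>))"
    using integral_distr[of X M borel g] integral_distr[of Y M borel g] distr by simp
qed

lemma (in prob_space) indep_centered_sum_sq:
  fixes Z :: "nat \<Rightarrow> 'a \<Rightarrow> real"
  assumes indep: "indep_vars (\<lambda>_. borel) Z UNIV"
    and Z: "\<And>i. integrable M (Z i)" "\<And>i. integrable M (\<lambda>\<omega>. (Z i \<omega>)\<^sup>2)"
    and mean: "\<And>i. expectation (Z i) = 0" and var: "\<And>i. expectation (\<lambda>\<omega>. (Z i \<omega>)\<^sup>2) = v"
  shows "integrable M (\<lambda>\<omega>. (\<Sum>j<k. Z j \<omega>)\<^sup>2)"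
    and "expectation (\<lambda>\<omega>. (\<Sum>j<k. Z j \<omega>)\<^sup>2) = real k * v"
proof -
  have cross: "integrable M (\<lambda>\<omega>. Z i \<omega> * Z j \<omega>) \<and> expectation (\<lambda>\<omega>. Z i \<omega> * Z j \<omega>) = (if i = j then v else 0)"
    for i j
  proof (cases "i = j")
    case True
    then show ?thesis using Z(2)[of i] var[of i] by (simp add: power2_eq_square)
  next
    case False
    have "indep_vars (\<lambda>_. borel) Z {i, j}"
      by (rule indep_vars_subset[OF indep]) auto
    then have "integrable M (\<lambda>\<omega>. \<Prod>l\<in>{i, j}. Z l \<omega>)"
      and "expectation (\<lambda>\<omega>. \<Prod>l\<in>{i, j}. Z l \<omega>) = (\<Prod>l\<in>{i, j}. expectation (Z l))"
      using Z(1) by (auto intro: indep_vars_integrable indep_vars_lebesgue_integral)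
    then show ?thesis
      using False mean by simp
  qed
  have sq: "(\<Sum>j<k. Z j \<omega>)\<^sup>2 = (\<Sum>i<k. \<Sum>j<k. Z i \<omega> * Z j \<omega>)" for \<omega>
    by (simp add: power2_eq_square sum_product)
  show "integrable M (\<lambda>\<omega>. (\<Sum>j<k. Z j \<omega>)\<^sup>2)"
    unfolding sq by (intro Bochner_Integration.integrable_sum) (simp add: cross)
  have "expectation (\<lambda>\<omega>. (\<Sum>j<k. Z j \<omega>)\<^sup>2) = (\<Sum>i<k. \<Sum>j<k. expectation (\<lambda>\<omega>. Z i \<omega> * Z j \<omega>))"
    unfolding sq using cross by (simp add: Bochner_Integration.integral_sum)
  also have "\<dots> = (\<Sum>i<k. \<Sum>j<k. if i = j then v else 0)"
    using cross by simp
  also have "\<dots> = real k * v"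
    by simp
  finally show "expectation (\<lambda>\<omega>. (\<Sum>j<k. Z j \<omega>)\<^sup>2) = real k * v" .
qed

lemma (in prob_space) iid_partial_sum_moments:
  fixes X :: "nat \<Rightarrow> 'a \<Rightarrow> real"
  assumes X[measurable]: "\<And>i. X i \<in> borel_measurable M"
    and indep: "indep_vars (\<lambda>_. borel) X UNIV"
    and ident: "\<And>i. distr M borel (X i) = distr M borel (X 0)"
    and sq: "integrable M (\<lambda>\<omega>. (X 0 \<omega>)\<^sup>2)"
  shows "integrable M (\<lambda>\<omega>. \<Sum>j<k. X j \<omega>)"
    and "integrable M (\<lambda>\<omega>. (\<Sum>j<k. X j \<omega>)\<^sup>2)"
    and "expectation (\<lambda>\<omega>. \<Sum>j<k. X j \<omega>) = real k * expectation (X 0)"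
    and "expectation (\<lambda>\<omega>. ((\<Sum>j<k. X j \<omega>) - real k * expectation (X 0))\<^sup>2) = real k * variance (X 0)"
proof -
  define a where "a = expectation (X 0)"
  define Z where "Z i \<omega> = X i \<omega> - a" for i \<omega>
  have "integrable M (X 0)"
    using square_integrable_imp_integrable[OF X sq] .
  then have "integrable M (\<lambda>\<omega>. X 0 \<omega> - a)" "integrable M (\<lambda>\<omega>. (X 0 \<omega> - a)\<^sup>2)"
    using sq by (simp_all add: power2_diff)
  then have Z: "integrable M (Z i)" "integrable M (\<lambda>\<omega>. (Z i \<omega>)\<^sup>2)" for i
    unfolding Z_def
    using integrable_comp_eq_if_distr_eq[OF X X _ ident[of i], where g = "\<lambda>x. x - a"]
      integrable_comp_eq_if_distr_eq[OF X X _ ident[of i], where g = "\<lambda>x. (x - a)\<^sup>2"]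
    by simp_all
  have "expectation (\<lambda>\<omega>. X 0 \<omega> - a) = 0"
    using \<open>integrable M (X 0)\<close> by (simp add: a_def prob_space)
  then have EZ: "expectation (Z i) = 0" "expectation (\<lambda>\<omega>. (Z i \<omega>)\<^sup>2) = variance (X 0)" for i
    unfolding Z_def a_def
    using integral_comp_eq_if_distr_eq[OF X X _ ident[of i], where g = "\<lambda>x. x - expectation (X 0)"]
      integral_comp_eq_if_distr_eq[OF X X _ ident[of i], where g = "\<lambda>x. (x - expectation (X 0))\<^sup>2"]
    by simp_all
  have "indep_vars (\<lambda>_. borel) Z UNIV"
    unfolding Z_def by (rule indep_vars_compose2[OF indep]) simp
  from indep_centered_sum_sq[OF this Z EZ]
  have sum_Z: "integrable M (\<lambda>\<omega>. (\<Sum>j<k. Z j \<omega>)\<^sup>2)"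
      "expectation (\<lambda>\<omega>. (\<Sum>j<k. Z j \<omega>)\<^sup>2) = real k * variance (X 0)"
    by simp_all
  have sum_X: "(\<Sum>j<k. X j \<omega>) = (\<Sum>j<k. Z j \<omega>) + real k * a" for \<omega>
    by (simp add: Z_def sum_subtractf)
  have "integrable M (\<lambda>\<omega>. \<Sum>j<k. Z j \<omega>)" "expectation (\<lambda>\<omega>. \<Sum>j<k. Z j \<omega>) = 0"
    using Z EZ by (simp_all add: Bochner_Integration.integral_sum)
  with sum_Z show "integrable M (\<lambda>\<omega>. \<Sum>j<k. X j \<omega>)"
    and "integrable M (\<lambda>\<omega>. (\<Sum>j<k. X j \<omega>)\<^sup>2)"
    and "expectation (\<lambda>\<omega>. \<Sum>j<k. X j \<omega>) = real k * expectation (X 0)"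
    and "expectation (\<lambda>\<omega>. ((\<Sum>j<k. X j \<omega>) - real k * expectation (X 0))\<^sup>2) = real k * variance (X 0)"
    unfolding sum_X a_def[symmetric] by (simp_all add: power2_sum prob_space)
qed

lemma (in prob_space) normalized_partial_sum_moments:
  fixes X :: "nat \<Rightarrow> 'a \<Rightarrow> real"
  assumes X: "\<And>i. X i \<in> borel_measurable M" "indep_vars (\<lambda>_. borel) X UNIV"
      "\<And>i. distr M borel (X i) = distr M borel (X 0)" "integrable M (\<lambda>\<omega>. (X 0 \<omega>)\<^sup>2)"
    and a: "expectation (X 0) \<noteq> 0" and "m \<noteq> 0"
  defines "T k \<omega> \<equiv> (\<Sum>j<k. X j \<omega>) / (expectation (X 0) * m)"
  shows "integrable M (\<lambda>\<omega>. T k \<omega>)" and "integrable M (\<lambda>\<omega>. (T k \<omega>)\<^sup>2)"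
    and "expectation (\<lambda>\<omega>. T k \<omega>) = real k / m"
    and "expectation (\<lambda>\<omega>. (T k \<omega> - real k / m)\<^sup>2)
      = real k * (variance (X 0) / (expectation (X 0))\<^sup>2) / m\<^sup>2"
proof -
  note moments = iid_partial_sum_moments[OF X, of k]
  let ?c = "expectation (X 0) * m"
  show "integrable M (\<lambda>\<omega>. T k \<omega>)" and "integrable M (\<lambda>\<omega>. (T k \<omega>)\<^sup>2)"
    and "expectation (\<lambda>\<omega>. T k \<omega>) = real k / m"
    using moments(1-3) a \<open>m \<noteq> 0\<close> by (simp_all add: T_def power_divide)
  have "(\<lambda>\<omega>. (T k \<omega> - real k / m)\<^sup>2) = (\<lambda>\<omega>. ((\<Sum>j<k. X j \<omega>) - real k * expectation (X 0))\<^sup>2 / ?c\<^sup>2)"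
    using a \<open>m \<noteq> 0\<close> by (simp add: T_def fun_eq_iff field_simps)
  then show "expectation (\<lambda>\<omega>. (T k \<omega> - real k / m)\<^sup>2)
      = real k * (variance (X 0) / (expectation (X 0))\<^sup>2) / m\<^sup>2"
    using moments(4) by (simp add: power_mult_distrib)
qed

section \<open>Independence and random indices\<close>

lemma sigma_sets_vimage_sets:
  assumes "X \<in> measurable M N"
  shows "sigma_sets (space M) {X -` A \<inter> space M | A. A \<in> sets N} = {X -` A \<inter> space M | A. A \<in> sets N}"
  using sets_vimage_algebra2[of X "space M" N] measurable_space[OF assms]
  by (simp add: sets_vimage_algebra Pi_iff)

lemma (in prob_space) indep_rv_imp_indep_var:
  assumes "indep_rv M M1 X1 M2 X2"
  shows "indep_var M1 X1 M2 X2"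
  using assms by (simp add: indep_var_eq indep_rv_def sigma_sets_vimage_sets)

lemma vimage_sets_compose_subset:
  assumes "X \<in> measurable M N" and "h \<in> measurable N K"
  shows "{(\<lambda>\<omega>. h (X \<omega>)) -` A \<inter> space M | A. A \<in> sets K} \<subseteq> {X -` B \<inter> space M | B. B \<in> sets N}"
proof clarify
  fix A assume "A \<in> sets K"
  with assms(2) have "h -` A \<inter> space N \<in> sets N"
    by (rule measurable_sets)
  moreover have "(\<lambda>\<omega>. h (X \<omega>)) -` A \<inter> space M = X -` (h -` A \<inter> space N) \<inter> space M"
    using measurable_space[OF assms(1)] by auto
  ultimately show "\<exists>B. (\<lambda>\<omega>. h (X \<omega>)) -` A \<inter> space M = X -` B \<inter> space M \<and> B \<in> sets N"
    by blast
qed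

lemma (in prob_space) indep_rv_compose:
  assumes "indep_rv M M1 X1 M2 X2" and h1: "h1 \<in> measurable M1 N1" and h2: "h2 \<in> measurable M2 N2"
  shows "indep_rv M N1 (\<lambda>\<omega>. h1 (X1 \<omega>)) N2 (\<lambda>\<omega>. h2 (X2 \<omega>))"
proof -
  have X: "X1 \<in> measurable M M1" "X2 \<in> measurable M M2"
    using assms(1) by (simp_all add: indep_rv_def)
  have "indep_sets (case_bool {X1 -` A \<inter> space M | A. A \<in> sets M1} {X2 -` B \<inter> space M | B. B \<in> sets M2}) UNIV"
    using assms(1) by (simp add: indep_rv_def indep_set_def)
  then have "indep_set {(\<lambda>\<omega>. h1 (X1 \<omega>)) -` A \<inter> space M | A. A \<in> sets N1}
      {(\<lambda>\<omega>. h2 (X2 \<omega>)) -` B \<inter> space M | B. B \<in> sets N2}"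
    unfolding indep_set_def
  proof (rule indep_sets_mono_sets)
    fix i :: bool
    show "case_bool {(\<lambda>\<omega>. h1 (X1 \<omega>)) -` A \<inter> space M | A. A \<in> sets N1}
        {(\<lambda>\<omega>. h2 (X2 \<omega>)) -` B \<inter> space M | B. B \<in> sets N2} i
      \<subseteq> case_bool {X1 -` A \<inter> space M | A. A \<in> sets M1} {X2 -` B \<inter> space M | B. B \<in> sets M2} i"
      using vimage_sets_compose_subset[OF X(1) h1] vimage_sets_compose_subset[OF X(2) h2]
      by (cases i) simp_all
  qed
  then show ?thesis
    using X h1 h2 by (simp add: indep_rv_def)
qed

lemma (in prob_space) integral_indicator_mult_indep:
  fixes K :: "'a \<Rightarrow> nat" and Z :: "'a \<Rightarrow> 'i \<Rightarrow> real" and g :: "('i \<Rightarrow> real) \<Rightarrow> real"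
  assumes "indep_rv M (count_space UNIV) K (Pi\<^sub>M UNIV (\<lambda>_. borel)) Z"
    and g: "g \<in> borel_measurable (Pi\<^sub>M UNIV (\<lambda>_. borel))"
    and "integrable M (\<lambda>\<omega>. g (Z \<omega>))"
  shows "(\<integral>\<omega>. indicator {\<omega> \<in> space M. K \<omega> = k} \<omega> * g (Z \<omega>) \<partial>M)
    = prob {\<omega> \<in> space M. K \<omega> = k} * expectation (\<lambda>\<omega>. g (Z \<omega>))"
proof -
  have K: "K \<in> measurable M (count_space UNIV)"
    using assms(1) unfolding indep_rv_def by simp
  then have ev: "{\<omega> \<in> space M. K \<omega> = k} \<in> events"
    by simp
  \<comment> \<open>\<open>indep_var\<close> needs a common codomain, so both variables are first mapped to the reals\<close>
  have "indep_rv M borel (\<lambda>\<omega>. indicator {k} (K \<omega>) :: real) borel (\<lambda>\<omega>. g (Z \<omega>))"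
    by (rule indep_rv_compose[OF assms(1) _ g]) simp
  then have indep: "indep_var borel (\<lambda>\<omega>. indicator {k} (K \<omega>) :: real) borel (\<lambda>\<omega>. g (Z \<omega>))"
    by (rule indep_rv_imp_indep_var)
  have ind: "indicator {\<omega> \<in> space M. K \<omega> = k} \<omega> = (indicator {k} (K \<omega>) :: real)"
    if "\<omega> \<in> space M" for \<omega>
    using that by (auto simp: indicator_def)
  have "integrable M (\<lambda>\<omega>. indicator {k} (K \<omega>) :: real)"
  proof (rule integrable_const_bound[where B = 1])
    show "(\<lambda>\<omega>. indicator {k} (K \<omega>) :: real) \<in> borel_measurable M"
      using K by (rule measurable_compose) simp
  qed simp
  have "(\<integral>\<omega>. indicator {\<omega> \<in> space M. K \<omega> = k} \<omega> * g (Z \<omega>) \<partial>M)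
      = (\<integral>\<omega>. indicator {k} (K \<omega>) * g (Z \<omega>) \<partial>M)"
    by (rule Bochner_Integration.integral_cong) (simp_all add: ind)
  also have "\<dots> = expectation (\<lambda>\<omega>. indicator {k} (K \<omega>)) * expectation (\<lambda>\<omega>. g (Z \<omega>))"
    by (rule indep_var_lebesgue_integral[OF indep]) fact+
  also have "expectation (\<lambda>\<omega>. indicator {k} (K \<omega>)) = expectation (indicator {\<omega> \<in> space M. K \<omega> = k})"
    by (rule Bochner_Integration.integral_cong) (auto simp: indicator_def)
  finally show ?thesis
    using ev by simp
qed

lemma (in prob_space) prob_eq_nat_sums:
  assumes "K \<in> measurable M (count_space UNIV)"
  shows "(\<lambda>k. prob {\<omega> \<in> space M. K \<omega> = k}) sums 1"
proof -
  have "(\<lambda>k. prob {\<omega> \<in> space M. K \<omega> = (k :: nat)}) sums prob (\<Union>k. {\<omega> \<in> space M. K \<omega> = k})"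
    using assms by (intro measure_UNION) (auto simp: disjoint_family_on_def)
  moreover have "(\<Union>k. {\<omega> \<in> space M. K \<omega> = k}) = space M"
    by auto
  ultimately show ?thesis
    by (simp add: prob_space)
qed

lemma (in prob_space) sums_integral_at_random_index:
  fixes K :: "'a \<Rightarrow> nat" and F :: "nat \<Rightarrow> 'a \<Rightarrow> real"
  assumes K: "K \<in> measurable M (count_space UNIV)"
    and F: "\<And>k. F k \<in> borel_measurable M" and bound: "\<And>k \<omega>. \<omega> \<in> space M \<Longrightarrow> \<bar>F k \<omega>\<bar> \<le> B"
  shows "(\<lambda>k. \<integral>\<omega>. indicator {\<omega> \<in> space M. K \<omega> = k} \<omega> * F k \<omega> \<partial>M) sums (\<integral>\<omega>. F (K \<omega>) \<omega> \<partial>M)"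
proof -
  define E where "E k = {\<omega> \<in> space M. K \<omega> = k}" for k
  define f where "f k \<omega> = indicator (E k) \<omega> * F k \<omega>" for k \<omega>
  have E: "E k \<in> events" for k
    using K by (simp add: E_def)
  have f_eq: "f k \<omega> = (if k = K \<omega> then F k \<omega> else 0)" if "\<omega> \<in> space M" for k \<omega>
    using that by (auto simp: f_def E_def)
  have int_f: "integrable M (f k)" for k
  proof -
    have "integrable M (F k)"
      using bound by (intro integrable_const_bound[where B = B] AE_I2 F) auto
    then show ?thesis
      unfolding f_def using integrable_real_mult_indicator[OF E] by (simp add: mult.commute)
  qed
  have "(\<integral>\<omega>. norm (f k \<omega>) \<partial>M) \<le> (\<integral>\<omega>. B * indicator (E k) \<omega> \<partial>M)" for k
  proof (rule integral_mono)
    show "integrable M (\<lambda>\<omega>. norm (f k \<omega>))"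
      using int_f by simp
    show "integrable M (\<lambda>\<omega>. B * indicator (E k) \<omega>)"
      using E by (intro integrable_mult_right integrable_real_indicator) (simp_all add: less_top[symmetric])
    show "norm (f k \<omega>) \<le> B * indicator (E k) \<omega>" if "\<omega> \<in> space M" for \<omega>
      using bound[OF that] by (simp add: f_def indicator_def)
  qed
  then have le: "(\<integral>\<omega>. norm (f k \<omega>) \<partial>M) \<le> B * prob (E k)" for k
    using E by simp
  have "summable (\<lambda>k. B * prob (E k))"
    using prob_eq_nat_sums[OF K] by (intro summable_mult sums_summable) (auto simp: E_def)
  then have "summable (\<lambda>k. \<integral>\<omega>. norm (f k \<omega>) \<partial>M)"
    by (rule summable_comparison_test'[where N = 0]) (use le in simp)
  moreover have "AE \<omega> in M. summable (\<lambda>k. norm (f k \<omega>))"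
  proof (rule AE_I2)
    fix \<omega> assume "\<omega> \<in> space M"
    then have "(\<lambda>k. norm (f k \<omega>)) = (\<lambda>k. if k = K \<omega> then norm (F k \<omega>) else 0)"
      by (simp add: f_eq fun_eq_iff)
    then show "summable (\<lambda>k. norm (f k \<omega>))"
      using sums_single[of "K \<omega>" "\<lambda>k. norm (F k \<omega>)"] by (simp add: sums_iff)
  qed
  ultimately have "(\<lambda>k. integral\<^sup>L M (f k)) sums (\<integral>\<omega>. (\<Sum>k. f k \<omega>) \<partial>M)"
    using int_f by (intro sums_integral) auto
  moreover have "(\<Sum>k. f k \<omega>) = F (K \<omega>) \<omega>" if "\<omega> \<in> space M" for \<omega>
    using sums_single[of "K \<omega>" "\<lambda>k. F k \<omega>"] that by (simp add: f_eq sums_iff cong: if_cong)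
  ultimately show ?thesis
    by (simp add: f_def E_def cong: Bochner_Integration.integral_cong)
qed

lemma (in prob_space) abs_expectation_le_bound:
  fixes g :: "'a \<Rightarrow> real"
  assumes "\<And>\<omega>. \<omega> \<in> space M \<Longrightarrow> \<bar>g \<omega>\<bar> \<le> B" and "integrable M g"
  shows "\<bar>expectation g\<bar> \<le> B"
proof -
  have "\<bar>expectation g\<bar> \<le> expectation (\<lambda>\<omega>. \<bar>g \<omega>\<bar>)"
    by (rule integral_abs_bound)
  also have "\<dots> \<le> expectation (\<lambda>_. B)"
    using assms by (intro integral_mono) auto
  finally show ?thesis
    by (simp add: prob_space)
qed

lemma (in prob_space) sums_expectation_indep_random_index:
  fixes K :: "'a \<Rightarrow> nat" and Z :: "'a \<Rightarrow> 'i \<Rightarrow> real" and g :: "nat \<Rightarrow> ('i \<Rightarrow> real) \<Rightarrow> real"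
  assumes indep: "indep_rv M (count_space UNIV) K (Pi\<^sub>M UNIV (\<lambda>_. borel)) Z"
    and g: "\<And>k. g k \<in> borel_measurable (Pi\<^sub>M UNIV (\<lambda>_. borel))" and bound: "\<And>k z. \<bar>g k z\<bar> \<le> B"
  shows "(\<lambda>k. prob {\<omega> \<in> space M. K \<omega> = k} * expectation (\<lambda>\<omega>. g k (Z \<omega>)))
    sums expectation (\<lambda>\<omega>. g (K \<omega>) (Z \<omega>))"
proof -
  have K: "K \<in> measurable M (count_space UNIV)" and Z: "Z \<in> measurable M (Pi\<^sub>M UNIV (\<lambda>_. borel))"
    using indep by (simp_all add: indep_rv_def)
  have gZ: "(\<lambda>\<omega>. g k (Z \<omega>)) \<in> borel_measurable M" for k
    using Z g by (rule measurable_compose)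
  have "integrable M (\<lambda>\<omega>. g k (Z \<omega>))" for k
    using gZ bound by (intro integrable_const_bound[where B = B] AE_I2) auto
  then have "(\<integral>\<omega>. indicator {\<omega> \<in> space M. K \<omega> = k} \<omega> * g k (Z \<omega>) \<partial>M)
      = prob {\<omega> \<in> space M. K \<omega> = k} * expectation (\<lambda>\<omega>. g k (Z \<omega>))" for k
    by (rule integral_indicator_mult_indep[OF indep g])
  moreover have "(\<lambda>k. \<integral>\<omega>. indicator {\<omega> \<in> space M. K \<omega> = k} \<omega> * g k (Z \<omega>) \<partial>M)
      sums expectation (\<lambda>\<omega>. g (K \<omega>) (Z \<omega>))"
    using gZ bound by (intro sums_integral_at_random_index[OF K, where B = B])
  ultimately show ?thesis
    by simp
qed

section \<open>A Poisson process at an independent random time\<close>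

lemma std_poisson_process_prob:
  assumes "std_poisson_process M N" and "0 \<le> t"
  shows "measure M {\<omega> \<in> space M. N t \<omega> = k} = poisson_prob t k"
proof -
  have N0: "\<forall>\<omega>\<in>space M. N 0 \<omega> = 0"
    and law: "\<forall>u t (j::nat). 0 \<le> u \<longrightarrow> u \<le> t \<longrightarrow>
      measure M {\<omega> \<in> space M. N t \<omega> - N u \<omega> = j} = exp (- (t - u)) * (t - u) ^ j / fact j"
    using assms(1) unfolding std_poisson_process_def by blast+
  have "{\<omega> \<in> space M. N t \<omega> = k} = {\<omega> \<in> space M. N t \<omega> - N 0 \<omega> = k}"
    using N0 by auto
  then show ?thesis
    using law[rule_format, of 0 t k] assms(2) by (simp add: poisson_prob_def)
qed

lemma right_continuous_nat_eventually_eq: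
  fixes F :: "real \<Rightarrow> nat"
  assumes "continuous (at_right t) (\<lambda>u. real (F u))" and "u \<longlonglongrightarrow> t" and "\<And>j. t \<le> u j"
  shows "eventually (\<lambda>j. F (u j) = F t) sequentially"
proof -
  have "continuous (at t within {t..}) (\<lambda>u. real (F u))"
    using assms(1) by (simp add: at_within_Ici_at_right)
  then have "(\<lambda>j. real (F (u j))) \<longlonglongrightarrow> real (F t)"
    using assms(2,3) unfolding continuous_within_sequentially by (auto simp: o_def)
  then have "eventually (\<lambda>j. dist (real (F (u j))) (real (F t)) < 1) sequentially"
    by (rule tendstoD) simp
  then show ?thesis
    by eventually_elim (simp add: dist_real_def)
qed

definition upper_grid :: "nat \<Rightarrow> real \<Rightarrow> real" where
  "upper_grid j x = real (nat \<lceil>real (Suc j) * x\<rceil>) / real (Suc j)"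

lemma upper_grid_bounds:
  assumes "0 \<le> x"
  shows "x \<le> upper_grid j x" and "upper_grid j x \<le> x + 1 / real (Suc j)"
proof -
  have "real (nat \<lceil>real (Suc j) * x\<rceil>) = real_of_int \<lceil>real (Suc j) * x\<rceil>"
    using assms by simp
  then have lo: "real (Suc j) * x \<le> real (nat \<lceil>real (Suc j) * x\<rceil>)"
    and hi: "real (nat \<lceil>real (Suc j) * x\<rceil>) \<le> real (Suc j) * x + 1"
    using le_of_int_ceiling[of "real (Suc j) * x"] of_int_ceiling_le_add_one[of "real (Suc j) * x"]
    by simp_all
  have "x = real (Suc j) * x / real (Suc j)"
    by simp
  also have "\<dots> \<le> upper_grid j x"
    unfolding upper_grid_def using lo by (rule divide_right_mono) simp
  finally show "x \<le> upper_grid j x" .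
  have "upper_grid j x \<le> (real (Suc j) * x + 1) / real (Suc j)"
    unfolding upper_grid_def using hi by (rule divide_right_mono) simp
  also have "\<dots> = x + 1 / real (Suc j)"
    by (simp add: add_divide_distrib)
  finally show "upper_grid j x \<le> x + 1 / real (Suc j)" .
qed

lemma upper_grid_tendsto: "0 \<le> x \<Longrightarrow> (\<lambda>j. upper_grid j x) \<longlonglongrightarrow> x"
  using upper_grid_bounds[of x]
  by (intro tendsto_sandwich[OF _ _ tendsto_const LIMSEQ_inverse_real_of_nat_add]) (auto simp: inverse_eq_divide)

lemma component_event_in_vimage_sets:
  fixes Y :: "'a \<Rightarrow> 'i \<Rightarrow> 'b"
  assumes "Y \<in> measurable M (Pi\<^sub>M UNIV (\<lambda>_. count_space UNIV))"
  shows "{\<omega> \<in> space M. Y \<omega> i = y} \<in> {Y -` S \<inter> space M | S. S \<in> sets (Pi\<^sub>M UNIV (\<lambda>_. count_space UNIV))}"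
proof -
  let ?S = "(\<lambda>\<phi>. \<phi> i) -` {y} \<inter> space (Pi\<^sub>M UNIV (\<lambda>_. count_space UNIV :: 'b measure))"
  have S: "?S \<in> sets (Pi\<^sub>M UNIV (\<lambda>_. count_space UNIV))"
    by (rule measurable_sets[OF measurable_component_singleton]) auto
  have "{\<omega> \<in> space M. Y \<omega> i = y} = Y -` ?S \<inter> space M"
    using measurable_space[OF assms] by auto
  then show ?thesis
    using S by blast
qed

lemma level_set_in_vimage_sets:
  assumes "X \<in> measurable M N" and "c \<in> measurable N (count_space UNIV)"
  shows "{\<omega> \<in> space M. c (X \<omega>) = i} \<in> {X -` S \<inter> space M | S. S \<in> sets N}"
proof -
  have S: "c -` {i} \<inter> space N \<in> sets N"
    using assms(2) by (rule measurable_sets) simp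
  have "{\<omega> \<in> space M. c (X \<omega>) = i} = X -` (c -` {i} \<inter> space N) \<inter> space M"
    using measurable_space[OF assms(1)] by auto
  then show ?thesis
    using S by blast
qed

lemma (in prob_space) poisson_process_at_independent_discrete_time:
  fixes N :: "real \<Rightarrow> 'a \<Rightarrow> nat" and \<Lambda> :: "'a \<Rightarrow> 'b" and c :: "'b \<Rightarrow> nat"
  assumes N: "std_poisson_process M N"
    and indep: "indep_rv M (Pi\<^sub>M UNIV (\<lambda>_. count_space UNIV)) (\<lambda>\<omega> t. N t \<omega>) L \<Lambda>"
    and c: "c \<in> measurable L (count_space UNIV)" and t: "\<And>i. 0 \<le> t i"
  shows "prob {\<omega> \<in> space M. N (t (c (\<Lambda> \<omega>))) \<omega> = k} = expectation (\<lambda>\<omega>. poisson_prob (t (c (\<Lambda> \<omega>))) k)"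
proof -
  let ?P = "Pi\<^sub>M UNIV (\<lambda>_. count_space UNIV) :: (real \<Rightarrow> nat) measure"
  define A where "A i = {\<omega> \<in> space M. N (t i) \<omega> = k}" for i
  define B where "B i = {\<omega> \<in> space M. c (\<Lambda> \<omega>) = i}" for i
  have process: "(\<lambda>\<omega> t. N t \<omega>) \<in> measurable M ?P" and \<Lambda>: "\<Lambda> \<in> measurable M L"
    and indep_set: "indep_set {(\<lambda>\<omega> t. N t \<omega>) -` S \<inter> space M | S. S \<in> sets ?P} {\<Lambda> -` S \<inter> space M | S. S \<in> sets L}"
    using indep by (auto simp: indep_rv_def)
  have K: "(\<lambda>\<omega>. c (\<Lambda> \<omega>)) \<in> measurable M (count_space UNIV)"
    using \<Lambda> c by (rule measurable_compose)
  have A_gen: "A i \<in> {(\<lambda>\<omega> t. N t \<omega>) -` S \<inter> space M | S. S \<in> sets ?P}" for i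
    unfolding A_def by (rule component_event_in_vimage_sets[OF process])
  have B_gen: "B i \<in> {\<Lambda> -` S \<inter> space M | S. S \<in> sets L}" for i
    unfolding B_def by (rule level_set_in_vimage_sets[OF \<Lambda> c])
  have A_ev: "A i \<in> events" and B_ev: "B i \<in> events" for i
    using subsetD[OF indep_sets2_eq[THEN iffD1, OF indep_set, THEN conjunct1] A_gen]
      subsetD[OF indep_sets2_eq[THEN iffD1, OF indep_set, THEN conjunct2, THEN conjunct1] B_gen]
    by simp_all
  have AB: "prob (A i \<inter> B i) = poisson_prob (t i) k * prob (B i)" for i
    using indep_setD[OF indep_set A_gen B_gen] std_poisson_process_prob[OF N t] by (simp add: A_def)
  have "(\<lambda>i. prob (A i \<inter> B i)) sums prob (\<Union>i. A i \<inter> B i)"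
    using A_ev B_ev by (intro finite_measure_UNION) (auto simp: disjoint_family_on_def B_def)
  moreover have "(\<Union>i. A i \<inter> B i) = {\<omega> \<in> space M. N (t (c (\<Lambda> \<omega>))) \<omega> = k}"
    by (auto simp: A_def B_def)
  ultimately have "(\<lambda>i. poisson_prob (t i) k * prob (B i)) sums prob {\<omega> \<in> space M. N (t (c (\<Lambda> \<omega>))) \<omega> = k}"
    by (simp add: AB)
  moreover have "(\<lambda>i. \<integral>\<omega>. indicator (B i) \<omega> * poisson_prob (t i) k \<partial>M)
      sums expectation (\<lambda>\<omega>. poisson_prob (t (c (\<Lambda> \<omega>))) k)"
    unfolding B_def using t poisson_prob_nonneg poisson_prob_le_1
    by (intro sums_integral_at_random_index[OF K, where B = 1]) auto
  ultimately show ?thesis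
    using B_ev
    by (simp add: sums_iff mult.commute)
qed

lemma (in prob_space) poisson_process_at_upper_grid_time:
  fixes N :: "real \<Rightarrow> 'a \<Rightarrow> nat" and \<tau> :: "'a \<Rightarrow> real"
  assumes N: "std_poisson_process M N"
    and indep: "indep_rv M (Pi\<^sub>M UNIV (\<lambda>_. count_space UNIV)) (\<lambda>\<omega> t. N t \<omega>) borel \<tau>"
  shows "{\<omega> \<in> space M. N (upper_grid j (\<tau> \<omega>)) \<omega> = k} \<in> events"
    and "(\<lambda>\<omega>. poisson_prob (upper_grid j (\<tau> \<omega>)) k) \<in> borel_measurable M"
    and "prob {\<omega> \<in> space M. N (upper_grid j (\<tau> \<omega>)) \<omega> = k}
      = expectation (\<lambda>\<omega>. poisson_prob (upper_grid j (\<tau> \<omega>)) k)"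
proof -
  define c where "c x = nat \<lceil>real (Suc j) * x\<rceil>" for x
  have "(\<lambda>x. \<lceil>real (Suc j) * x\<rceil>) \<in> measurable borel (count_space UNIV)"
    by (intro measurable_compose[OF _ measurable_real_ceiling]) simp
  then have c: "c \<in> measurable borel (count_space UNIV)"
    unfolding c_def by (rule measurable_compose[OF _ measurable_count_space])
  have "\<tau> \<in> borel_measurable M"
    using indep by (simp add: indep_rv_def)
  then have c_\<tau>: "(\<lambda>\<omega>. c (\<tau> \<omega>)) \<in> measurable M (count_space UNIV)"
    using c by (rule measurable_compose)
  have grid: "upper_grid j x = real (c x) / real (Suc j)" for x
    by (simp add: upper_grid_def c_def)
  have "N t \<in> measurable M (count_space UNIV)" for t
    using N by (simp add: std_poisson_process_def)
  then have "(\<lambda>\<omega>. (\<lambda>i. N (real i / real (Suc j))) (c (\<tau> \<omega>)) \<omega>) \<in> measurable M (count_space UNIV)"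
    by (rule measurable_compose_countable'[OF _ c_\<tau>]) auto
  then show "{\<omega> \<in> space M. N (upper_grid j (\<tau> \<omega>)) \<omega> = k} \<in> events"
    by (simp add: grid)
  have "(\<lambda>\<omega>. (\<lambda>i \<omega>. poisson_prob (real i / real (Suc j)) k) (c (\<tau> \<omega>)) \<omega>) \<in> borel_measurable M"
    by (rule measurable_compose_countable'[OF _ c_\<tau>]) auto
  then show "(\<lambda>\<omega>. poisson_prob (upper_grid j (\<tau> \<omega>)) k) \<in> borel_measurable M"
    by (simp add: grid)
  show "prob {\<omega> \<in> space M. N (upper_grid j (\<tau> \<omega>)) \<omega> = k}
      = expectation (\<lambda>\<omega>. poisson_prob (upper_grid j (\<tau> \<omega>)) k)"
    unfolding grid by (rule poisson_process_at_independent_discrete_time[OF N indep c]) simp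
qed

lemma (in prob_space) poisson_process_at_independent_time:
  fixes N :: "real \<Rightarrow> 'a \<Rightarrow> nat" and \<tau> :: "'a \<Rightarrow> real"
  assumes N: "std_poisson_process M N"
    and indep: "indep_rv M (Pi\<^sub>M UNIV (\<lambda>_. count_space UNIV)) (\<lambda>\<omega> t. N t \<omega>) borel \<tau>"
    and \<tau>_nonneg: "\<And>\<omega>. \<omega> \<in> space M \<Longrightarrow> 0 \<le> \<tau> \<omega>"
    and N_\<tau>: "(\<lambda>\<omega>. N (\<tau> \<omega>) \<omega>) \<in> measurable M (count_space UNIV)"
  shows "prob {\<omega> \<in> space M. N (\<tau> \<omega>) \<omega> = k} = expectation (\<lambda>\<omega>. poisson_prob (\<tau> \<omega>) k)"
proof -
  note grid = poisson_process_at_upper_grid_time[OF N indep]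
  define E where "E j = {\<omega> \<in> space M. N (upper_grid j (\<tau> \<omega>)) \<omega> = k}" for j
  have "(\<lambda>j. expectation (indicator (E j) :: 'a \<Rightarrow> real))
      \<longlonglongrightarrow> expectation (indicator {\<omega> \<in> space M. N (\<tau> \<omega>) \<omega> = k})"
  proof (rule integral_dominated_convergence[where w = "\<lambda>_. 1"])
    show "AE \<omega> in M. (\<lambda>j. indicator (E j) \<omega> :: real) \<longlonglongrightarrow> indicator {\<omega> \<in> space M. N (\<tau> \<omega>) \<omega> = k} \<omega>"
    proof (rule AE_I2)
      fix \<omega> assume \<omega>: "\<omega> \<in> space M"
      \<comment> \<open>the grid times decrease to \<open>\<tau> \<omega>\<close>, so right-continuity of the path freezes the count\<close>
      have "eventually (\<lambda>j. N (upper_grid j (\<tau> \<omega>)) \<omega> = N (\<tau> \<omega>) \<omega>) sequentially"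
        using N \<omega> \<tau>_nonneg[OF \<omega>] upper_grid_bounds(1) upper_grid_tendsto
        by (intro right_continuous_nat_eventually_eq) (auto simp: std_poisson_process_def)
      then show "(\<lambda>j. indicator (E j) \<omega> :: real) \<longlonglongrightarrow> indicator {\<omega> \<in> space M. N (\<tau> \<omega>) \<omega> = k} \<omega>"
        by (rule tendsto_eventually[OF eventually_mono]) (simp add: E_def indicator_def)
    qed
  qed (use grid(1) N_\<tau> in \<open>auto simp: E_def indicator_def\<close>)
  then have "(\<lambda>j. prob (E j)) \<longlonglongrightarrow> prob {\<omega> \<in> space M. N (\<tau> \<omega>) \<omega> = k}"
    using grid(1) N_\<tau> by (simp add: E_def)
  moreover have "(\<lambda>j. expectation (\<lambda>\<omega>. poisson_prob (upper_grid j (\<tau> \<omega>)) k))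
      \<longlonglongrightarrow> expectation (\<lambda>\<omega>. poisson_prob (\<tau> \<omega>) k)"
  proof (rule integral_dominated_convergence[where w = "\<lambda>_. 1"])
    show "AE \<omega> in M. (\<lambda>j. poisson_prob (upper_grid j (\<tau> \<omega>)) k) \<longlonglongrightarrow> poisson_prob (\<tau> \<omega>) k"
      using \<tau>_nonneg unfolding poisson_prob_def by (intro AE_I2 tendsto_intros upper_grid_tendsto) auto
    show "AE \<omega> in M. norm (poisson_prob (upper_grid j (\<tau> \<omega>)) k) \<le> 1" for j
    proof (rule AE_I2)
      fix \<omega> assume "\<omega> \<in> space M"
      then have "0 \<le> upper_grid j (\<tau> \<omega>)"
        using \<tau>_nonneg upper_grid_bounds(1) by (meson order_trans)
      then show "norm (poisson_prob (upper_grid j (\<tau> \<omega>)) k) \<le> 1"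
        by (simp add: poisson_prob_nonneg poisson_prob_le_1)
    qed
  qed (use grid(2) indep in \<open>auto simp: poisson_prob_def indep_rv_def\<close>)
  ultimately show ?thesis
    using LIMSEQ_unique by (simp add: E_def grid(3))
qed

lemma (in prob_space) integrable_poisson_prob:
  assumes "\<tau> \<in> borel_measurable M" and "\<And>\<omega>. \<omega> \<in> space M \<Longrightarrow> 0 \<le> \<tau> \<omega>"
  shows "integrable M (\<lambda>\<omega>. poisson_prob (\<tau> \<omega>) k)"
proof (rule integrable_const_bound[where B = 1])
  show "AE \<omega> in M. norm (poisson_prob (\<tau> \<omega>) k) \<le> 1"
    using assms(2) by (intro AE_I2) (simp add: poisson_prob_nonneg poisson_prob_le_1)
  show "(\<lambda>\<omega>. poisson_prob (\<tau> \<omega>) k) \<in> borel_measurable M"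
    using assms(1) unfolding poisson_prob_def by measurable
qed

lemma (in prob_space) summable_expectation_poisson_prob:
  assumes "\<tau> \<in> borel_measurable M" and "\<And>\<omega>. \<omega> \<in> space M \<Longrightarrow> 0 \<le> \<tau> \<omega>"
  shows "summable (\<lambda>k. expectation (\<lambda>\<omega>. poisson_prob (\<tau> \<omega>) k))"
proof (rule summableI_nonneg_bounded)
  note int = integrable_poisson_prob[OF assms]
  show "0 \<le> expectation (\<lambda>\<omega>. poisson_prob (\<tau> \<omega>) k)" for k
    using assms(2) by (intro integral_nonneg_AE AE_I2) (simp add: poisson_prob_nonneg)
  have "expectation (\<lambda>\<omega>. \<Sum>k<n. poisson_prob (\<tau> \<omega>) k) \<le> expectation (\<lambda>_. 1)" for n
    using int assms(2) by (intro integral_mono) (simp_all add: poisson_prob_sum_le_1)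
  then show "(\<Sum>k<n. expectation (\<lambda>\<omega>. poisson_prob (\<tau> \<omega>) k)) \<le> 1" for n
    using int by (simp add: Bochner_Integration.integral_sum prob_space)
qed

lemma (in prob_space) sums_expectation_poisson_mixture:
  fixes \<tau> :: "'a \<Rightarrow> real" and e :: "nat \<Rightarrow> real"
  assumes \<tau>: "\<tau> \<in> borel_measurable M" "\<And>\<omega>. \<omega> \<in> space M \<Longrightarrow> 0 \<le> \<tau> \<omega>" and e: "\<And>k. \<bar>e k\<bar> \<le> B"
  shows "integrable M (\<lambda>\<omega>. \<Sum>k. poisson_prob (\<tau> \<omega>) k * e k)"
    and "(\<lambda>k. expectation (\<lambda>\<omega>. poisson_prob (\<tau> \<omega>) k) * e k)
      sums expectation (\<lambda>\<omega>. \<Sum>k. poisson_prob (\<tau> \<omega>) k * e k)"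
proof -
  have int: "integrable M (\<lambda>\<omega>. poisson_prob (\<tau> \<omega>) k * e k)" for k
    using integrable_poisson_prob[OF \<tau>] by simp
  have summable_int: "summable (\<lambda>k. \<integral>\<omega>. norm (poisson_prob (\<tau> \<omega>) k * e k) \<partial>M)"
  proof (rule summable_comparison_test'[OF summable_mult2[OF summable_expectation_poisson_prob[OF \<tau>]], where N = 0])
    fix k
    have "(\<integral>\<omega>. norm (poisson_prob (\<tau> \<omega>) k * e k) \<partial>M) = (\<integral>\<omega>. poisson_prob (\<tau> \<omega>) k * \<bar>e k\<bar> \<partial>M)"
      using \<tau>(2) by (intro Bochner_Integration.integral_cong) (simp_all add: abs_mult poisson_prob_nonneg)
    moreover have "0 \<le> expectation (\<lambda>\<omega>. poisson_prob (\<tau> \<omega>) k)"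
      using \<tau>(2) by (intro integral_nonneg_AE AE_I2) (simp add: poisson_prob_nonneg)
    ultimately show "norm (\<integral>\<omega>. norm (poisson_prob (\<tau> \<omega>) k * e k) \<partial>M)
        \<le> expectation (\<lambda>\<omega>. poisson_prob (\<tau> \<omega>) k) * B"
      using e[of k] by (simp add: mult_left_mono)
  qed
  have summable_AE: "AE \<omega> in M. summable (\<lambda>k. norm (poisson_prob (\<tau> \<omega>) k * e k))"
  proof (rule AE_I2)
    fix \<omega> assume "\<omega> \<in> space M"
    then have "norm (norm (poisson_prob (\<tau> \<omega>) k * e k)) \<le> poisson_prob (\<tau> \<omega>) k * B" for k
      using \<tau>(2) e[of k] by (simp add: abs_mult poisson_prob_nonneg mult_left_mono)
    then show "summable (\<lambda>k. norm (poisson_prob (\<tau> \<omega>) k * e k))"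
      by (rule summable_comparison_test'[OF summable_mult2[OF sums_summable[OF poisson_prob_sums]], where N = 0])
  qed
  show "integrable M (\<lambda>\<omega>. \<Sum>k. poisson_prob (\<tau> \<omega>) k * e k)"
    by (rule integrable_suminf[OF int summable_AE summable_int])
  show "(\<lambda>k. expectation (\<lambda>\<omega>. poisson_prob (\<tau> \<omega>) k) * e k)
      sums expectation (\<lambda>\<omega>. \<Sum>k. poisson_prob (\<tau> \<omega>) k * e k)"
    using sums_integral[OF int summable_AE summable_int] by simp
qed

lemma (in prob_space) expectation_at_poisson_index:
  fixes N :: "real \<Rightarrow> 'a \<Rightarrow> nat" and \<tau> :: "'a \<Rightarrow> real" and Z :: "'a \<Rightarrow> 'i \<Rightarrow> real"
    and g :: "nat \<Rightarrow> ('i \<Rightarrow> real) \<Rightarrow> real"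
  assumes N: "std_poisson_process M N"
    and N_\<tau>: "indep_rv M (Pi\<^sub>M UNIV (\<lambda>_. count_space UNIV)) (\<lambda>\<omega> t. N t \<omega>) borel \<tau>"
    and \<tau>_nonneg: "\<And>\<omega>. \<omega> \<in> space M \<Longrightarrow> 0 \<le> \<tau> \<omega>"
    and N_Z: "indep_rv M (count_space UNIV) (\<lambda>\<omega>. N (\<tau> \<omega>) \<omega>) (Pi\<^sub>M UNIV (\<lambda>_. borel)) Z"
    and g: "\<And>k. g k \<in> borel_measurable (Pi\<^sub>M UNIV (\<lambda>_. borel))" and g_bound: "\<And>k z. \<bar>g k z\<bar> \<le> B"
  shows "integrable M (\<lambda>\<omega>. \<Sum>k. poisson_prob (\<tau> \<omega>) k * expectation (\<lambda>\<omega>'. g k (Z \<omega>')))"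
    and "expectation (\<lambda>\<omega>. g (N (\<tau> \<omega>) \<omega>) (Z \<omega>))
      = expectation (\<lambda>\<omega>. \<Sum>k. poisson_prob (\<tau> \<omega>) k * expectation (\<lambda>\<omega>'. g k (Z \<omega>')))"
proof -
  have \<tau>: "\<tau> \<in> borel_measurable M" and N_\<tau>_meas: "(\<lambda>\<omega>. N (\<tau> \<omega>) \<omega>) \<in> measurable M (count_space UNIV)"
    using N_\<tau> N_Z by (simp_all add: indep_rv_def)
  have "\<bar>expectation (\<lambda>\<omega>. g k (Z \<omega>))\<bar> \<le> B" for k
  proof -
    have "Z \<in> measurable M (Pi\<^sub>M UNIV (\<lambda>_. borel))"
      using N_Z by (simp add: indep_rv_def)
    then have "(\<lambda>\<omega>. g k (Z \<omega>)) \<in> borel_measurable M"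
      using g by (rule measurable_compose)
    then show ?thesis
      using g_bound by (intro abs_expectation_le_bound integrable_const_bound[where B = B] AE_I2) auto
  qed
  note mixture = sums_expectation_poisson_mixture[OF \<tau> \<tau>_nonneg this]
  show "integrable M (\<lambda>\<omega>. \<Sum>k. poisson_prob (\<tau> \<omega>) k * expectation (\<lambda>\<omega>'. g k (Z \<omega>')))"
    using mixture(1) by simp
  have "(\<lambda>k. prob {\<omega> \<in> space M. N (\<tau> \<omega>) \<omega> = k} * expectation (\<lambda>\<omega>. g k (Z \<omega>)))
      sums expectation (\<lambda>\<omega>. g (N (\<tau> \<omega>) \<omega>) (Z \<omega>))"
    by (rule sums_expectation_indep_random_index[OF N_Z g g_bound])
  then show "expectation (\<lambda>\<omega>. g (N (\<tau> \<omega>) \<omega>) (Z \<omega>))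
      = expectation (\<lambda>\<omega>. \<Sum>k. poisson_prob (\<tau> \<omega>) k * expectation (\<lambda>\<omega>'. g k (Z \<omega>')))"
    using mixture(2) poisson_process_at_independent_time[OF N N_\<tau> \<tau>_nonneg N_\<tau>_meas]
    by (simp add: sums_unique2)
qed

lemma (in prob_space) random_sum_test_function_le:
  fixes \<Lambda> :: "'a \<Rightarrow> real" and N :: "real \<Rightarrow> 'a \<Rightarrow> nat" and X :: "nat \<Rightarrow> 'a \<Rightarrow> real"
    and f D :: "real \<Rightarrow> real"
  assumes \<Lambda>: "\<Lambda> \<in> borel_measurable M" "\<And>\<omega>. \<omega> \<in> space M \<Longrightarrow> 0 < \<Lambda> \<omega>"
    and N: "std_poisson_process M N"
    and N_\<Lambda>: "indep_rv M (Pi\<^sub>M UNIV (\<lambda>_. count_space UNIV)) (\<lambda>\<omega> t. N t \<omega>) borel \<Lambda>"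
    and X: "\<And>i. X i \<in> borel_measurable M" "indep_vars (\<lambda>_. borel) X UNIV"
      "\<And>i. distr M borel (X i) = distr M borel (X 0)" "integrable M (\<lambda>\<omega>. (X 0 \<omega>)\<^sup>2)"
    and a: "expectation (X 0) \<noteq> 0" and m: "0 < m"
    and N_X: "indep_rv M (count_space UNIV) (\<lambda>\<omega>. N (m * \<Lambda> \<omega>) \<omega>) (Pi\<^sub>M UNIV (\<lambda>_. borel)) (\<lambda>\<omega> i. X i \<omega>)"
    and f[measurable]: "f \<in> borel_measurable borel" and f_bound: "\<And>x. \<bar>f x\<bar> \<le> B"
    and taylor: "\<And>x y. \<bar>f x - f y - D y * (x - y)\<bar> \<le> G * \<bar>x - y\<bar> powr s"
    and G: "0 \<le> G" and s: "0 < s" "s \<le> 2"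
  shows "ennreal \<bar>expectation (\<lambda>\<omega>. f ((\<Sum>j<N (m * \<Lambda> \<omega>) \<omega>. X j \<omega>) / (expectation (X 0) * m)))
      - expectation (\<lambda>\<omega>. f (\<Lambda> \<omega>))\<bar>
    \<le> (\<integral>\<^sup>+\<omega>. ennreal (G * (\<Lambda> \<omega> * (1 + variance (X 0) / (expectation (X 0))\<^sup>2) / m) powr (s / 2)) \<partial>M)"
proof -
  let ?a = "expectation (X 0)"
  define v where "v = variance (X 0) / ?a\<^sup>2"
  define T where "T k \<omega> = (\<Sum>j<k. X j \<omega>) / (?a * m)" for k \<omega>
  define L where "L x = (\<Sum>k. poisson_prob (m * x) k * expectation (\<lambda>\<omega>. f (T k \<omega>)))" for x
  have T: "integrable M (\<lambda>\<omega>. T k \<omega>)" "integrable M (\<lambda>\<omega>. (T k \<omega>)\<^sup>2)"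
      "expectation (\<lambda>\<omega>. T k \<omega>) = real k / m" "expectation (\<lambda>\<omega>. (T k \<omega> - real k / m)\<^sup>2) = real k * v / m\<^sup>2"
    for k
    using normalized_partial_sum_moments[OF X a, of m k] m by (simp_all add: T_def v_def)
  have "integrable M (\<lambda>\<omega>. f (T k \<omega>))" for k
    using borel_measurable_integrable[OF T(1)] f_bound
    by (intro integrable_const_bound[where B = B] AE_I2) auto
  moreover have "0 \<le> v"
    by (simp add: v_def)
  ultimately have L: "\<bar>L x - f x\<bar> \<le> G * (x * (1 + v) / m) powr (s / 2)" if "0 < x" for x
    using poisson_mixture_taylor_bound(2)[OF T(1,2) _ T(3,4) taylor[of _ x] G s m] that
    by (simp add: L_def)
  have "indep_rv M (Pi\<^sub>M UNIV (\<lambda>_. count_space UNIV)) (\<lambda>\<omega> t. N t \<omega>) borel (\<lambda>\<omega>. m * \<Lambda> \<omega>)"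
    using indep_rv_compose[OF N_\<Lambda> measurable_ident, of "\<lambda>x. m * x"] by simp
  from expectation_at_poisson_index[OF N this _ N_X, where g = "\<lambda>k z. f ((\<Sum>j<k. z j) / (?a * m))" and B = B]
  have L_int: "integrable M (\<lambda>\<omega>. L (\<Lambda> \<omega>))"
    and EfS: "expectation (\<lambda>\<omega>. f (T (N (m * \<Lambda> \<omega>) \<omega>) \<omega>)) = expectation (\<lambda>\<omega>. L (\<Lambda> \<omega>))"
    using \<Lambda>(2) m f_bound by (simp_all add: L_def T_def less_imp_le)
  have f\<Lambda>: "integrable M (\<lambda>\<omega>. f (\<Lambda> \<omega>))"
    using \<Lambda>(1) f_bound by (intro integrable_const_bound[where B = B] AE_I2) auto
  have "ennreal \<bar>expectation (\<lambda>\<omega>. f (T (N (m * \<Lambda> \<omega>) \<omega>) \<omega>)) - expectation (\<lambda>\<omega>. f (\<Lambda> \<omega>))\<bar>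
      = ennreal (norm (expectation (\<lambda>\<omega>. L (\<Lambda> \<omega>) - f (\<Lambda> \<omega>))))"
    using L_int f\<Lambda> by (simp add: EfS)
  also have "\<dots> \<le> (\<integral>\<^sup>+\<omega>. ennreal (norm (L (\<Lambda> \<omega>) - f (\<Lambda> \<omega>))) \<partial>M)"
    using L_int f\<Lambda> by (intro integral_norm_bound_ennreal) simp
  also have "\<dots> \<le> (\<integral>\<^sup>+\<omega>. ennreal (G * (\<Lambda> \<omega> * (1 + v) / m) powr (s / 2)) \<partial>M)"
    using L \<Lambda>(2) by (intro nn_integral_mono ennreal_leI) simp
  finally show ?thesis
    by (simp add: T_def v_def)
qed

lemma (in prob_space) zolotarev_random_sum_le:
  fixes \<Lambda> :: "'a \<Rightarrow> real" and N :: "real \<Rightarrow> 'a \<Rightarrow> nat" and X :: "nat \<Rightarrow> 'a \<Rightarrow> real"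
  assumes \<Lambda>: "\<Lambda> \<in> borel_measurable M" "\<And>\<omega>. \<omega> \<in> space M \<Longrightarrow> 0 < \<Lambda> \<omega>"
    and N: "std_poisson_process M N"
    and N_\<Lambda>: "indep_rv M (Pi\<^sub>M UNIV (\<lambda>_. count_space UNIV)) (\<lambda>\<omega> t. N t \<omega>) borel \<Lambda>"
    and X: "\<And>i. X i \<in> borel_measurable M" "indep_vars (\<lambda>_. borel) X UNIV"
      "\<And>i. distr M borel (X i) = distr M borel (X 0)" "integrable M (\<lambda>\<omega>. (X 0 \<omega>)\<^sup>2)"
    and a: "expectation (X 0) \<noteq> 0" and m: "0 < m"
    and N_X: "indep_rv M (count_space UNIV) (\<lambda>\<omega>. N (m * \<Lambda> \<omega>) \<omega>) (Pi\<^sub>M UNIV (\<lambda>_. borel)) (\<lambda>\<omega> i. X i \<omega>)"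
    and s: "1 \<le> s" "s \<le> 2"
  shows "zolotarev M s (\<lambda>\<omega>. (\<Sum>j<N (m * \<Lambda> \<omega>) \<omega>. X j \<omega>) / (expectation (X 0) * m)) \<Lambda>
    \<le> (\<integral>\<^sup>+\<omega>. ennreal (\<Lambda> \<omega> powr (s / 2)) \<partial>M)
      * ennreal (1 / m powr (s / 2) * (Gamma (1 + zol_alpha s) / Gamma (1 + s))
        * (1 + variance (X 0) / (expectation (X 0))\<^sup>2) powr (s / 2))"
proof -
  let ?G = "Gamma (1 + zol_alpha s) / Gamma (1 + s)"
  let ?c = "1 + variance (X 0) / (expectation (X 0))\<^sup>2"
  let ?K = "1 / m powr (s / 2) * ?G * ?c powr (s / 2)"
  have "0 \<le> ?G"
    using zol_alpha_pos[of s] s by (simp add: less_imp_le)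
  have "0 < ?c"
    by (simp add: add_pos_nonneg)
  have "zolotarev M s (\<lambda>\<omega>. (\<Sum>j<N (m * \<Lambda> \<omega>) \<omega>. X j \<omega>) / (expectation (X 0) * m)) \<Lambda>
      \<le> (\<integral>\<^sup>+\<omega>. ennreal (?G * (\<Lambda> \<omega> * ?c / m) powr (s / 2)) \<partial>M)"
    unfolding zolotarev_def
  proof (rule SUP_least)
    fix f assume f: "f \<in> zol_class s"
    have "f \<in> borel_measurable borel"
      using zol_class_continuous[OF _ f] s by (intro borel_measurable_continuous_onI) simp
    moreover obtain B where "\<And>x. \<bar>f x\<bar> \<le> B"
      using zol_class_bounded[OF f] by blast
    moreover obtain D where "\<And>x y. \<bar>f x - f y - D y * (x - y)\<bar> \<le> ?G * \<bar>x - y\<bar> powr s"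
      using zol_class_taylor_bound[OF s f] by blast
    ultimately show "ennreal \<bar>expectation (\<lambda>\<omega>. f ((\<Sum>j<N (m * \<Lambda> \<omega>) \<omega>. X j \<omega>) / (expectation (X 0) * m)))
        - expectation (\<lambda>\<omega>. f (\<Lambda> \<omega>))\<bar> \<le> (\<integral>\<^sup>+\<omega>. ennreal (?G * (\<Lambda> \<omega> * ?c / m) powr (s / 2)) \<partial>M)"
      using \<open>0 \<le> ?G\<close> s by (intro random_sum_test_function_le[OF \<Lambda> N N_\<Lambda> X a m N_X]) auto
  qed
  also have "\<dots> = (\<integral>\<^sup>+\<omega>. ennreal (\<Lambda> \<omega> powr (s / 2)) * ennreal ?K \<partial>M)"
  proof (rule nn_integral_cong)
    fix \<omega> assume "\<omega> \<in> space M"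
    have eq: "?G * (\<Lambda> \<omega> * ?c / m) powr (s / 2) = \<Lambda> \<omega> powr (s / 2) * ?K"
      by (simp add: powr_mult powr_divide ac_simps)
    have "0 \<le> ?K"
      using \<open>0 \<le> ?G\<close> by (intro mult_nonneg_nonneg) simp_all
    then show "ennreal (?G * (\<Lambda> \<omega> * ?c / m) powr (s / 2)) = ennreal (\<Lambda> \<omega> powr (s / 2)) * ennreal ?K"
      unfolding eq by (rule ennreal_mult'')
  qed
  also have "\<dots> = (\<integral>\<^sup>+\<omega>. ennreal (\<Lambda> \<omega> powr (s / 2)) \<partial>M) * ennreal ?K"
    using \<Lambda>(1) by (intro nn_integral_multc) simp
  finally show ?thesis .
qed

theorem corollary2:
  fixes M :: "'a measure"
    and \<Lambda> :: "'a \<Rightarrow> real"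
    and N :: "real \<Rightarrow> 'a \<Rightarrow> nat"
    and mm :: "nat \<Rightarrow> real"
    and X :: "nat \<Rightarrow> 'a \<Rightarrow> real"
    and s :: real and n :: nat
  assumes P: "prob_space M"
    and Lam_rv: "\<Lambda> \<in> borel_measurable M"
    and Lam_pos: "\<forall>\<omega>\<in>space M. \<Lambda> \<omega> > 0"
    and N_pp: "std_poisson_process M N"
    and N_indep_Lam: "indep_rv M
          (Pi\<^sub>M UNIV (\<lambda>_. count_space UNIV)) (\<lambda>\<omega> t. N t \<omega>) borel \<Lambda>"
    and mm_pos: "\<forall>k. mm k > 0"
    and mm_lim: "filterlim mm at_top sequentially"
    and X_rv: "\<forall>i. X i \<in> borel_measurable M"
    and X_indep: "prob_space.indep_vars M (\<lambda>_. borel) X UNIV"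
    and X_ident: "\<forall>i. distr M borel (X i) = distr M borel (X 0)"
    and X_sq: "integrable M (\<lambda>\<omega>. (X 0 \<omega>)\<^sup>2)"
    and a_ne: "(\<integral>\<omega>. X 0 \<omega> \<partial>M) \<noteq> 0"
    and NX_indep: "\<forall>k. indep_rv M
          (count_space UNIV) (\<lambda>\<omega>. N (mm k * \<Lambda> \<omega>) \<omega>)
          (Pi\<^sub>M UNIV (\<lambda>_. borel)) (\<lambda>\<omega> i. X i \<omega>)"
    and s_ge: "1 \<le> s" and s_le: "s \<le> 2"
  shows
   "(let a = (\<integral>\<omega>. X 0 \<omega> \<partial>M);
         \<sigma>2 = prob_space.variance M (X 0);
         S = (\<lambda>\<omega>. (\<Sum>j<N (mm n * \<Lambda> \<omega>) \<omega>. X j \<omega>) / (a * mm n))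
     in zolotarev M s S \<Lambda>
          \<le> (\<integral>\<^sup>+\<omega>. ennreal (\<Lambda> \<omega> powr (s / 2)) \<partial>M)
            * ennreal (1 / mm n powr (s / 2)
                       * (Gamma (1 + zol_alpha s) / Gamma (1 + s))
                       * (1 + \<sigma>2 / a\<^sup>2) powr (s / 2))
      \<and> zolotarev M 2 S \<Lambda>
          \<le> (\<integral>\<^sup>+\<omega>. ennreal (\<Lambda> \<omega>) \<partial>M)
            * ennreal ((1 + \<sigma>2 / a\<^sup>2) / (2 * mm n)))"
proof -
  interpret prob_space M by (rule P)
  have zol: "zolotarev M t (\<lambda>\<omega>. (\<Sum>j<N (mm n * \<Lambda> \<omega>) \<omega>. X j \<omega>) / (expectation (X 0) * mm n)) \<Lambda>
      \<le> (\<integral>\<^sup>+\<omega>. ennreal (\<Lambda> \<omega> powr (t / 2)) \<partial>M)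
        * ennreal (1 / mm n powr (t / 2) * (Gamma (1 + zol_alpha t) / Gamma (1 + t))
          * (1 + variance (X 0) / (expectation (X 0))\<^sup>2) powr (t / 2))"
    if "1 \<le> t" "t \<le> 2" for t
    using zolotarev_random_sum_le[OF Lam_rv _ N_pp N_indep_Lam _ X_indep _ X_sq a_ne _ NX_indep[rule_format] that]
      Lam_pos X_rv X_ident mm_pos by auto
  have "(\<integral>\<^sup>+\<omega>. ennreal (\<Lambda> \<omega> powr (2 / 2)) \<partial>M) = (\<integral>\<^sup>+\<omega>. ennreal (\<Lambda> \<omega>) \<partial>M)"
    using Lam_pos by (intro nn_integral_cong) (simp add: abs_of_pos)
  moreover have "1 / mm n powr (2 / 2) * (Gamma (1 + zol_alpha 2) / Gamma (1 + 2))
      * (1 + variance (X 0) / (expectation (X 0))\<^sup>2) powr (2 / 2)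
      = (1 + variance (X 0) / (expectation (X 0))\<^sup>2) / (2 * mm n)"
    using mm_pos[rule_format, of n] by (simp add: zol_alpha_2 Gamma_numeral add_pos_nonneg)
  ultimately show ?thesis
    using zol[OF s_ge s_le] zol[of 2] by (simp add: Let_def)
qed

end
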